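(* Let $d\ge2$ and let $C_1,C_2$ be Archimedean $d$-copulas whose generators $\phi_1,\phi_2$ are regularly varying at $0$ (with indices $-\alpha_1,-\alpha_2$, $\alpha_i\in[0,\infty]$). If $C_1<_{TD}C_2$, then $C_1\le_{loc}C_2$.
   Context: A generator is a continuous, strictly decreasing function $\phi:[0,1]\to[0,\infty]$ with $\phi(1)=0$; it is strict if $\lim_{s\searrow0}\phi(s)=\infty$. A $d$-copula $C$ (grounded, $d$-increasing, uniform margins) is Archimedean with generator $\phi$ if $C(\boldsymbol u)=\phi^{[-1]}(\sum_{k=1}^d\phi(u_k))$ with $\phi^{[-1]}(x)=\inf\{t\in[0,1]:\phi(t)\le x\}$. $\phi$ is regularly varying at $0$ with index $-\alpha$, $\alpha\in[0,\infty)$, if $\lim_{s\searrow0}\phi(ts)/\phi(s)=t^{-\alpha}$ for all $t>0$; with index $-\infty$ if this limit is $\infty$ for $t\in(0,1)$, $1$ for $t=1$, $0$ for $t>1$. Tail dependence function: $\Lambda(\boldsymbol w;C)=\lim_{s\searrow0}C(s\boldsymbol w)/s$. $C_1<_{TD}C_2$ means $\Lambda(\boldsymbol w;C_1)<\Lambda(\boldsymbol w;C_2)$ for all $\boldsymbol w\in(0,\infty)^d$; $C_1\le_{loc}C_2$ means there is $\varepsilon>0$ with $C_1\le C_2$ on $B_\varepsilon(\boldsymbol 0)\cap[0,1]^d$ (Euclidean ball). *)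

theory Defs
  imports "HOL-Analysis.Analysis"
begin

definition in_unit_cube :: "real^'d \<Rightarrow> bool" where
  "in_unit_cube u \<longleftrightarrow> (\<forall>i. 0 \<le> u$i \<and> u$i \<le> 1)"

definition generator :: "(real \<Rightarrow> ereal) \<Rightarrow> bool" where
  "generator \<phi> \<longleftrightarrow> continuous_on {0..1} \<phi>
     \<and> (\<forall>s t. 0 \<le> s \<and> s < t \<and> t \<le> 1 \<longrightarrow> \<phi> t < \<phi> s)
     \<and> (\<forall>s\<in>{0..1}. 0 \<le> \<phi> s) \<and> \<phi> 1 = 0"

definition pseudo_inv :: "(real \<Rightarrow> ereal) \<Rightarrow> ereal \<Rightarrow> real" where
  "pseudo_inv \<phi> x = Inf {t \<in> {0..1}. \<phi> t \<le> x}"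

definition grounded :: "(real^'d \<Rightarrow> real) \<Rightarrow> bool" where
  "grounded C \<longleftrightarrow> (\<forall>u. in_unit_cube u \<and> (\<exists>i. u$i = 0) \<longrightarrow> C u = 0)"

definition d_increasing :: "(real^'d \<Rightarrow> real) \<Rightarrow> bool" where
  "d_increasing C \<longleftrightarrow> (\<forall>a b. in_unit_cube a \<and> in_unit_cube b \<and> (\<forall>i. a$i \<le> b$i) \<longrightarrow>
     0 \<le> (\<Sum>S\<in>Pow (UNIV::'d set). (-1) ^ card S * C (\<chi> i. if i \<in> S then a$i else b$i)))"

definition uniform_margins :: "(real^'d \<Rightarrow> real) \<Rightarrow> bool" where
  "uniform_margins C \<longleftrightarrow> (\<forall>u k. in_unit_cube u \<and> (\<forall>j. j \<noteq> k \<longrightarrow> u$j = 1) \<longrightarrow> C u = u$k)"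

definition copula :: "(real^'d \<Rightarrow> real) \<Rightarrow> bool" where
  "copula C \<longleftrightarrow> grounded C \<and> d_increasing C \<and> uniform_margins C"

definition archimedean_copula :: "(real^'d \<Rightarrow> real) \<Rightarrow> (real \<Rightarrow> ereal) \<Rightarrow> bool" where
  "archimedean_copula C \<phi> \<longleftrightarrow> copula C \<and> generator \<phi>
     \<and> (\<forall>u. in_unit_cube u \<longrightarrow> C u = pseudo_inv \<phi> (\<Sum>k\<in>UNIV. \<phi> (u$k)))"

text \<open>Regular variation at 0 with index -alpha, alpha in [0,inf] (as an ereal).
  For s > 0 the generator value is finite, so the ratio is taken of real values.\<close>
definition regularly_varying_at0 :: "(real \<Rightarrow> ereal) \<Rightarrow> ereal \<Rightarrow> bool" where
  "regularly_varying_at0 \<phi> \<alpha> \<longleftrightarrow> 0 \<le> \<alpha> \<and>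
     (if \<alpha> = \<infinity> then
        (\<forall>t. 0 < t \<and> t < 1 \<longrightarrow>
           filterlim (\<lambda>s. real_of_ereal (\<phi> (t * s)) / real_of_ereal (\<phi> s)) at_top (at_right 0))
      \<and> ((\<lambda>s. real_of_ereal (\<phi> s) / real_of_ereal (\<phi> s)) \<longlongrightarrow> 1) (at_right 0)
      \<and> (\<forall>t. 1 < t \<longrightarrow>
           ((\<lambda>s. real_of_ereal (\<phi> (t * s)) / real_of_ereal (\<phi> s)) \<longlongrightarrow> 0) (at_right 0))
      else
        (\<forall>t. 0 < t \<longrightarrow>
           ((\<lambda>s. real_of_ereal (\<phi> (t * s)) / real_of_ereal (\<phi> s)) \<longlongrightarrow> t powr (- real_of_ereal \<alpha>))
             (at_right 0)))"

definition has_tail_dep :: "(real^'d \<Rightarrow> real) \<Rightarrow> real^'d \<Rightarrow> real \<Rightarrow> bool" where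
  "has_tail_dep C w L \<longleftrightarrow> ((\<lambda>s. C (s *\<^sub>R w) / s) \<longlongrightarrow> L) (at_right 0)"

definition TD_less :: "(real^'d \<Rightarrow> real) \<Rightarrow> (real^'d \<Rightarrow> real) \<Rightarrow> bool" where
  "TD_less C1 C2 \<longleftrightarrow> (\<forall>w. (\<forall>i. 0 < w$i) \<longrightarrow>
     (\<exists>L1 L2. has_tail_dep C1 w L1 \<and> has_tail_dep C2 w L2 \<and> L1 < L2))"

definition loc_le :: "(real^'d \<Rightarrow> real) \<Rightarrow> (real^'d \<Rightarrow> real) \<Rightarrow> bool" where
  "loc_le C1 C2 \<longleftrightarrow> (\<exists>\<epsilon>>0. \<forall>u. u \<in> ball 0 \<epsilon> \<and> in_unit_cube u \<longrightarrow> C1 u \<le> C2 u)"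

end

theory Submission
  imports Defs
begin

text \<open>
  If \<phi>1 is not strict, C1 vanishes near 0; if \<phi>2 is not strict, C2 vanishes near 0, so
  \<Lambda>(1,...,1;C2) = 0 \<le> \<Lambda>(1,...,1;C1), contradicting C1 <_TD C2.  For strict generators
  C_i(u) = \<psi>_i(\<Sigma> \<phi>_i(u_k)) with \<psi>_i the inverse of \<phi>_i, and C1 \<le> C2 near 0 follows, by
  induction over the coordinates, from the bivariate inequality
  \<phi>1(\<psi>2(\<phi>2 x + \<phi>2 y)) \<le> \<phi>1 x + \<phi>1 y for small x, y.

  Comparing the diagonal tail dependence of C1 and C2 forces \<alpha>1 < \<alpha>2 with \<alpha>1 finite.  For
  y \<le> x \<le> R y, regular variation makes \<psi>_i(\<phi>_i(r y) + \<phi>_i y) / y approach the Clayton tail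
  dependence function (1 + r^-\<alpha>_i)^(-1/\<alpha>_i), which is strictly increasing in \<alpha>; a finite grid
  in r makes this uniform on [1,R].  For y \<le> x / R one uses instead that the generators are
  convex (the 2-increasing property of a bivariate margin makes \<psi>_i midpoint convex) together
  with a Potter-type bound on \<phi>1(y) \<phi>2(x) / (\<phi>1(x) \<phi>2(y)); this is where R is chosen.
\<close>

section \<open>Strict generators and their inverses\<close>

text \<open>A strict generator restricted to (0,1], as a real function: \<phi> 0 = \<infinity> becomes divergence at 0.\<close>

definition strict_gen :: "(real \<Rightarrow> real) \<Rightarrow> bool" where
  "strict_gen f \<longleftrightarrow> continuous_on {0<..1} f \<and> (\<forall>s t. 0 < s \<and> s < t \<and> t \<le> 1 \<longrightarrow> f t < f s)
     \<and> f 1 = 0 \<and> filterlim f at_top (at_right 0)"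

lemma strict_gen_continuous: "strict_gen f \<Longrightarrow> continuous_on {0<..1} f"
  unfolding strict_gen_def by blast

lemma strict_gen_one: "strict_gen f \<Longrightarrow> f 1 = 0"
  unfolding strict_gen_def by blast

lemma strict_gen_less: "strict_gen f \<Longrightarrow> 0 < s \<Longrightarrow> s < t \<Longrightarrow> t \<le> 1 \<Longrightarrow> f t < f s"
  unfolding strict_gen_def by blast

lemma strict_gen_less_iff:
  "strict_gen f \<Longrightarrow> 0 < x \<Longrightarrow> x \<le> 1 \<Longrightarrow> 0 < y \<Longrightarrow> y \<le> 1 \<Longrightarrow> f x < f y \<longleftrightarrow> y < x"
  by (metis linorder_neqE_linordered_idom not_less_iff_gr_or_eq strict_gen_less)

lemma strict_gen_le_iff:
  "strict_gen f \<Longrightarrow> 0 < x \<Longrightarrow> x \<le> 1 \<Longrightarrow> 0 < y \<Longrightarrow> y \<le> 1 \<Longrightarrow> f x \<le> f y \<longleftrightarrow> y \<le> x"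
  by (meson not_less strict_gen_less_iff)

lemma strict_gen_pos: "strict_gen f \<Longrightarrow> 0 < x \<Longrightarrow> x < 1 \<Longrightarrow> 0 < f x"
  using strict_gen_less[of f x 1] strict_gen_one[of f] by simp

lemma strict_gen_nonneg: "strict_gen f \<Longrightarrow> 0 < x \<Longrightarrow> x \<le> 1 \<Longrightarrow> 0 \<le> f x"
  using strict_gen_pos[of f x] strict_gen_one[of f] by (cases "x = 1") auto

lemma strict_gen_surj:
  assumes f: "strict_gen f" and X: "0 \<le> X"
  shows "\<exists>x. 0 < x \<and> x \<le> 1 \<and> f x = X"
proof -
  have "eventually (\<lambda>x. X \<le> f x) (at_right (0::real))"
    using f unfolding strict_gen_def filterlim_at_top by blast
  then obtain b where b: "b > 0" "\<And>y. y > 0 \<Longrightarrow> y < b \<Longrightarrow> X \<le> f y"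
    unfolding eventually_at_right_field by blast
  define y where "y = min (b/2) (1/2)"
  have y: "0 < y" "y < b" "y \<le> 1" using b by (auto simp: y_def)
  have "continuous_on {y..1} f"
    using strict_gen_continuous[OF f] by (rule continuous_on_subset) (use y in auto)
  moreover have "f 1 \<le> X" using strict_gen_one[OF f] X by simp
  moreover have "X \<le> f y" using b(2) y by simp
  ultimately obtain x where "y \<le> x" "x \<le> 1" "f x = X"
    using IVT2'[of f 1 X y] y(3) by blast
  then show ?thesis using y by (intro exI[of _ x]) auto
qed

text \<open>Only meaningful for X \<ge> 0; for X < 0 the description fails and THE yields junk.\<close>

definition gen_inv :: "(real \<Rightarrow> real) \<Rightarrow> real \<Rightarrow> real" where
  "gen_inv f X = (THE x. 0 < x \<and> x \<le> 1 \<and> f x = X)"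

lemma gen_inv:
  assumes "strict_gen f" "0 \<le> X"
  shows "0 < gen_inv f X" "gen_inv f X \<le> 1" "f (gen_inv f X) = X"
proof -
  obtain x where x: "0 < x" "x \<le> 1" "f x = X" using strict_gen_surj[OF assms] by blast
  have "gen_inv f X = x"
    unfolding gen_inv_def using x strict_gen_less_iff[OF assms(1)]
    by (intro the_equality) (auto, metis less_irrefl linorder_neqE_linordered_idom)
  then show "0 < gen_inv f X" "gen_inv f X \<le> 1" "f (gen_inv f X) = X" using x by auto
qed

lemma gen_inv_inverse:
  assumes f: "strict_gen f" and x: "0 < x" "x \<le> 1"
  shows "gen_inv f (f x) = x"
proof -
  have "0 \<le> f x" using strict_gen_nonneg f x by blast
  then show ?thesis using gen_inv[OF f] strict_gen_less_iff[OF f] x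
    by (metis less_irrefl linorder_neqE_linordered_idom)
qed

lemma gen_inv_le_iff:
  assumes "strict_gen f" "0 \<le> X" "0 \<le> Y"
  shows "gen_inv f X \<le> gen_inv f Y \<longleftrightarrow> Y \<le> X"
  using strict_gen_le_iff[OF assms(1), of "gen_inv f X" "gen_inv f Y"]
    gen_inv[OF assms(1,2)] gen_inv[OF assms(1,3)]
  by auto

lemma le_gen_inv_iff:
  assumes "strict_gen f" "0 \<le> X" "0 < x" "x \<le> 1"
  shows "x \<le> gen_inv f X \<longleftrightarrow> X \<le> f x"
  using strict_gen_le_iff[OF assms(1), of "gen_inv f X" x] gen_inv[OF assms(1,2)] assms by auto

lemma less_gen_inv_iff:
  assumes "strict_gen f" "0 \<le> X" "0 < x" "x \<le> 1"
  shows "x < gen_inv f X \<longleftrightarrow> X < f x"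
  using strict_gen_less_iff[OF assms(1), of "gen_inv f X" x] gen_inv[OF assms(1,2)] assms by auto

lemma gen_inv_le:
  assumes f: "strict_gen f" "0 \<le> X" "0 < x" "x \<le> 1" "f x \<le> X"
  shows "gen_inv f X \<le> x"
proof -
  have "0 \<le> f x" using strict_gen_nonneg f by blast
  then have "gen_inv f X \<le> gen_inv f (f x)" using gen_inv_le_iff[OF f(1,2)] f by blast
  then show ?thesis using gen_inv_inverse[OF f(1,3,4)] by simp
qed

lemma gen_inv_less:
  assumes f: "strict_gen f" "0 \<le> X" "0 < x" "x \<le> 1" "f x < X"
  shows "gen_inv f X < x"
  using le_gen_inv_iff[OF f(1-4)] f(5) by (meson not_le)

lemma continuous_on_gen_inv:
  assumes f: "strict_gen f" and ab: "0 \<le> a" "a < b"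
  shows "continuous_on {a..b} (gen_inv f)"
proof -
  define S where "S = {gen_inv f b..gen_inv f a}"
  have "0 < gen_inv f b" "gen_inv f a \<le> 1" using gen_inv[OF f] ab by auto
  then have S: "S \<subseteq> {0<..1}" by (auto simp: S_def)
  have "continuous_on (f ` S) (gen_inv f)"
  proof (rule continuous_on_inv)
    show "continuous_on S f" using continuous_on_subset[OF strict_gen_continuous[OF f] S] .
    show "\<forall>x\<in>S. gen_inv f (f x) = x" using S gen_inv_inverse[OF f] by auto
  qed (simp add: S_def)
  moreover have "f ` S = {a..b}"
  proof
    show "f ` S \<subseteq> {a..b}"
    proof
      fix z assume "z \<in> f ` S"
      then obtain x where x: "x \<in> S" "z = f x" by blast
      then have "0 < x" "x \<le> 1" using S by auto
      moreover have "x \<le> gen_inv f a" "gen_inv f b \<le> x" using x by (auto simp: S_def)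
      ultimately have "a \<le> f x" "f x \<le> f (gen_inv f b)"
        using le_gen_inv_iff[OF f, of a x] strict_gen_le_iff[OF f, of x "gen_inv f b"]
          gen_inv[OF f, of b] ab by auto
      then show "z \<in> {a..b}" using x gen_inv(3)[OF f, of b] ab by auto
    qed
    show "{a..b} \<subseteq> f ` S"
    proof
      fix z assume z: "z \<in> {a..b}"
      then have "gen_inv f z \<in> S" using gen_inv_le_iff[OF f] ab by (auto simp: S_def)
      moreover have "f (gen_inv f z) = z" using gen_inv[OF f] z ab by auto
      ultimately show "z \<in> f ` S" by (metis image_eqI)
    qed
  qed
  ultimately show ?thesis by simp
qed

section \<open>Convexity\<close>

lemma midpoint_convex_le_0:
  fixes h :: "real \<Rightarrow> real"
  assumes cont: "continuous_on {a..b} h" and ha: "h a \<le> 0" and hb: "h b \<le> 0"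
    and mid: "\<And>x y. x \<in> {a..b} \<Longrightarrow> y \<in> {a..b} \<Longrightarrow> h ((x + y) / 2) \<le> (h x + h y) / 2"
    and x: "x \<in> {a..b}"
  shows "h x \<le> 0"
proof (rule ccontr)
  assume "\<not> h x \<le> 0"
  obtain x0 where x0: "x0 \<in> {a..b}" "\<And>y. y \<in> {a..b} \<Longrightarrow> h y \<le> h x0"
    using continuous_attains_sup[OF compact_Icc _ cont] x by fastforce
  define M where "M = h x0"
  have M: "0 < M" using x0(2)[OF x] \<open>\<not> h x \<le> 0\<close> by (simp add: M_def)
  \<comment> \<open>the leftmost maximiser cannot satisfy the midpoint inequality\<close>
  define S where "S = {z \<in> {a..b}. h z = M}"
  have "closed S"
    unfolding S_def by (rule continuous_closed_preimage_constant[OF cont]) simp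
  moreover have "S \<noteq> {}" using x0 by (auto simp: S_def M_def)
  moreover have Sbdd: "bdd_below S" unfolding S_def by (rule bdd_belowI[of _ a]) auto
  ultimately have "Inf S \<in> S" by (rule closed_contains_Inf[rotated -1])
  then obtain c where c: "c = Inf S" "c \<in> {a..b}" "h c = M" by (auto simp: S_def)
  then have "a < c" "c < b" using ha hb M by (auto simp: less_le)
  define e where "e = min (c - a) (b - c)"
  have e: "e > 0" "c - e \<in> {a..b}" "c + e \<in> {a..b}" using \<open>a < c\<close> \<open>c < b\<close> by (auto simp: e_def)
  have "c - e \<notin> S"
    using cInf_lower[OF _ Sbdd, of "c - e"] c(1) e(1) by auto
  then have "h (c - e) < M"
    using x0(2)[OF e(2)] e(2) by (auto simp: S_def M_def less_le)
  moreover have "h (c + e) \<le> M" using x0(2)[OF e(3)] by (simp add: M_def)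
  moreover have "h c \<le> (h (c - e) + h (c + e)) / 2" using mid[OF e(2,3)] by simp
  ultimately show False using c(3) by simp
qed

lemma midpoint_convex_imp_convex_on:
  fixes g :: "real \<Rightarrow> real"
  assumes I: "convex I"
    and cont: "\<And>a b. a \<in> I \<Longrightarrow> b \<in> I \<Longrightarrow> continuous_on {a..b} g"
    and mid: "\<And>x y. x \<in> I \<Longrightarrow> y \<in> I \<Longrightarrow> g ((x + y) / 2) \<le> (g x + g y) / 2"
  shows "convex_on I g"
proof (rule convex_on_linorderI[OF _ I])
  fix t x y :: real assume t: "0 < t" "t < 1" and xy: "x \<in> I" "y \<in> I" "x < y"
  have sub: "{x..y} \<subseteq> I"
    using I xy closed_segment_eq_real_ivl1[of x y] unfolding convex_contains_segment by auto
  define k where "k = 1 / (y - x)"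
  define w where "w z = (z - x) * k" for z
  define h where "h z = g z - ((1 - w z) * g x + w z * g y)" for z
  have w_mid: "w ((u + v) / 2) = (w u + w v) / 2" for u v
    by (simp add: w_def algebra_simps)
  have "h ((1 - t) * x + t * y) \<le> 0"
  proof (rule midpoint_convex_le_0[of x y h])
    show "continuous_on {x..y} h"
      unfolding h_def w_def using cont[OF xy(1,2)] by (intro continuous_intros)
    show "h x \<le> 0" "h y \<le> 0" using xy by (simp_all add: h_def w_def k_def)
    show "h ((u + v) / 2) \<le> (h u + h v) / 2" if "u \<in> {x..y}" "v \<in> {x..y}" for u v
    proof -
      have "u \<in> I" "v \<in> I" using sub that by auto
      then show ?thesis using mid[of u v] unfolding h_def w_mid by (simp add: field_simps)
    qed
    have "t * (y - x) \<le> 1 * (y - x)" using t xy by (intro mult_right_mono) auto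
    then show "(1 - t) * x + t * y \<in> {x..y}" using t xy by (auto simp: algebra_simps)
  qed
  moreover have "w ((1 - t) * x + t * y) = t" using xy by (simp add: w_def k_def field_simps)
  ultimately show "g ((1 - t) *\<^sub>R x + t *\<^sub>R y) \<le> (1 - t) * g x + t * g y"
    by (simp add: h_def)
qed

lemma convex_on_slope_cross:
  fixes f :: "real \<Rightarrow> real"
  assumes "convex_on I f" "p \<in> I" "r \<in> I" "p < q" "q < r"
  shows "(q - p) * (f q - f r) \<le> (r - q) * (f p - f q)"
proof -
  have "(f p - f q) / (p - q) \<le> (f q - f r) / (q - r)"
    using convex_on_slope_le[OF assms] by linarith
  then show ?thesis using assms(4,5) by (simp add: field_simps)
qed

lemma convex_on_strict_gen:
  assumes f: "strict_gen f" and conv: "convex_on {0..} (gen_inv f)"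
  shows "convex_on {0<..1} f"
proof (rule convex_onI)
  fix t x y :: real assume t: "0 < t" "t < 1" and x: "x \<in> {0<..1}" and y: "y \<in> {0<..1}"
  define z where "z = (1 - t) * x + t * y"
  have z: "0 < z" "z \<le> 1"
  proof -
    show "0 < z" using x y t by (simp add: z_def add_pos_pos)
    have "z \<le> (1 - t) * 1 + t * 1"
      using x y t unfolding z_def by (intro add_mono mult_left_mono) auto
    then show "z \<le> 1" by simp
  qed
  define Z where "Z = (1 - t) * f x + t * f y"
  have fx: "0 \<le> f x" and fy: "0 \<le> f y" using strict_gen_nonneg f x y by auto
  then have Z: "0 \<le> Z" using t by (simp add: Z_def)
  \<comment> \<open>convexity of the inverse, read through the decreasing map f\<close>
  have "gen_inv f Z \<le> (1 - t) * gen_inv f (f x) + t * gen_inv f (f y)"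
    using convex_onD[OF conv, of t "f x" "f y"] t fx fy by (simp add: Z_def)
  also have "\<dots> = z" using gen_inv_inverse[OF f] x y by (simp add: z_def)
  finally have "f z \<le> f (gen_inv f Z)"
    using strict_gen_le_iff[OF f z gen_inv(1,2)[OF f Z]] by simp
  then show "f ((1 - t) *\<^sub>R x + t *\<^sub>R y) \<le> (1 - t) * f x + t * f y"
    using gen_inv(3)[OF f Z] by (simp add: z_def Z_def)
qed simp

section \<open>Archimedean copulas\<close>

lemma archimedean_copula_generator: "archimedean_copula C \<phi> \<Longrightarrow> generator \<phi>"
  unfolding archimedean_copula_def by blast

definition gen_real :: "(real \<Rightarrow> ereal) \<Rightarrow> real \<Rightarrow> real" where
  "gen_real \<phi> x = real_of_ereal (\<phi> x)"

lemma generator_continuous: "generator \<phi> \<Longrightarrow> continuous_on {0..1} \<phi>"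
  unfolding generator_def by blast

lemma generator_less: "generator \<phi> \<Longrightarrow> 0 \<le> s \<Longrightarrow> s < t \<Longrightarrow> t \<le> 1 \<Longrightarrow> \<phi> t < \<phi> s"
  unfolding generator_def by blast

lemma generator_nonneg: "generator \<phi> \<Longrightarrow> 0 \<le> s \<Longrightarrow> s \<le> 1 \<Longrightarrow> 0 \<le> \<phi> s"
  unfolding generator_def by auto

lemma generator_one: "generator \<phi> \<Longrightarrow> \<phi> 1 = 0"
  unfolding generator_def by blast

lemma generator_finite:
  assumes "generator \<phi>" "0 < x" "x \<le> 1"
  shows "\<phi> x = ereal (gen_real \<phi> x)"
proof -
  have "\<phi> x < \<phi> 0" using generator_less[OF assms(1), of 0 x] assms by simp
  moreover have "0 \<le> \<phi> x" using generator_nonneg[OF assms(1)] assms by simp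
  ultimately show ?thesis unfolding gen_real_def by (cases "\<phi> x") auto
qed

lemma tendsto_generator_at_right_0: "generator \<phi> \<Longrightarrow> (\<phi> \<longlongrightarrow> \<phi> 0) (at_right 0)"
  using continuous_on_Icc_at_rightD[OF generator_continuous] by simp

lemma strict_gen_gen_real:
  assumes g: "generator \<phi>" and s: "\<phi> 0 = \<infinity>"
  shows "strict_gen (gen_real \<phi>)"
  unfolding strict_gen_def
proof (intro conjI allI impI)
  have "continuous_on {0<..1} \<phi>"
    using generator_continuous[OF g] by (rule continuous_on_subset) auto
  moreover have "continuous_on (\<phi> ` {0<..1}) real_of_ereal"
    using generator_finite[OF g]
    by (intro continuous_at_imp_continuous_on ballI) (auto intro: continuous_at_of_ereal)
  ultimately show "continuous_on {0<..1} (gen_real \<phi>)"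
    unfolding gen_real_def by (rule continuous_on_compose[unfolded o_def])
next
  fix s t :: real assume st: "0 < s \<and> s < t \<and> t \<le> 1"
  then show "gen_real \<phi> t < gen_real \<phi> s"
    using generator_less[OF g, of s t] generator_finite[OF g, of s] generator_finite[OF g, of t] by simp
next
  show "gen_real \<phi> 1 = 0" using generator_one[OF g] by (simp add: gen_real_def)
next
  have "eventually (\<lambda>x. \<phi> x = ereal (gen_real \<phi> x)) (at_right (0::real))"
    unfolding eventually_at_right_field by (intro exI[of _ 1]) (auto intro!: generator_finite[OF g])
  then have "((\<lambda>x. ereal (gen_real \<phi> x)) \<longlongrightarrow> \<infinity>) (at_right 0)"
    using tendsto_generator_at_right_0[OF g] s by (auto elim: Lim_transform_eventually)
  then show "filterlim (gen_real \<phi>) at_top (at_right 0)" by (simp add: tendsto_PInfty_eq_at_top)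
qed

lemma strict_gen_archimedean:
  "archimedean_copula C \<phi> \<Longrightarrow> \<phi> 0 = \<infinity> \<Longrightarrow> strict_gen (gen_real \<phi>)"
  using strict_gen_gen_real archimedean_copula_generator by blast

lemma pseudo_inv_eq_gen_inv:
  assumes g: "generator \<phi>" and s: "\<phi> 0 = \<infinity>" and X: "0 \<le> X"
  shows "pseudo_inv \<phi> (ereal X) = gen_inv (gen_real \<phi>) X"
proof -
  have f: "strict_gen (gen_real \<phi>)" using strict_gen_gen_real[OF g s] .
  have "{t \<in> {0..1}. \<phi> t \<le> ereal X} = {gen_inv (gen_real \<phi>) X..1}"
  proof (intro set_eqI iffI)
    fix t assume t: "t \<in> {t \<in> {0..1}. \<phi> t \<le> ereal X}"
    then have t0: "0 < t" "t \<le> 1" using s by (auto simp: less_le)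
    then have "gen_real \<phi> t \<le> X" using t generator_finite[OF g t0] by auto
    then show "t \<in> {gen_inv (gen_real \<phi>) X..1}"
      using le_gen_inv_iff[OF f X] t0 gen_inv[OF f X]
        strict_gen_le_iff[OF f t0 gen_inv(1,2)[OF f X]] by auto
  next
    fix t assume t: "t \<in> {gen_inv (gen_real \<phi>) X..1}"
    then have t0: "0 < t" "t \<le> 1" using gen_inv[OF f X] by auto
    have "gen_real \<phi> t \<le> gen_real \<phi> (gen_inv (gen_real \<phi>) X)"
      using strict_gen_le_iff[OF f t0 gen_inv(1,2)[OF f X]] t by auto
    then have "gen_real \<phi> t \<le> X" using gen_inv(3)[OF f X] by simp
    then show "t \<in> {t \<in> {0..1}. \<phi> t \<le> ereal X}" using generator_finite[OF g t0] t0 by auto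
  qed
  then show ?thesis unfolding pseudo_inv_def using gen_inv(2)[OF f X] by simp
qed

lemma archimedean_copula_eq_gen_inv:
  fixes C :: "real^'d \<Rightarrow> real"
  assumes a: "archimedean_copula C \<phi>" and s: "\<phi> 0 = \<infinity>" and u: "\<And>k. 0 < u$k \<and> u$k \<le> 1"
  shows "C u = gen_inv (gen_real \<phi>) (\<Sum>k\<in>UNIV. gen_real \<phi> (u$k))"
proof -
  have g: "generator \<phi>" using archimedean_copula_generator[OF a] .
  have "in_unit_cube u" using u unfolding in_unit_cube_def by (auto intro: less_imp_le)
  then have "C u = pseudo_inv \<phi> (\<Sum>k\<in>UNIV. \<phi> (u$k))"
    using a unfolding archimedean_copula_def by blast
  also have "(\<Sum>k\<in>UNIV. \<phi> (u$k)) = (\<Sum>k\<in>UNIV. ereal (gen_real \<phi> (u$k)))"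
    using generator_finite[OF g] u by (intro sum.cong) auto
  also have "\<dots> = ereal (\<Sum>k\<in>UNIV. gen_real \<phi> (u$k))" by (rule sum_ereal)
  also have "pseudo_inv \<phi> \<dots> = gen_inv (gen_real \<phi>) (\<Sum>k\<in>UNIV. gen_real \<phi> (u$k))"
    using strict_gen_nonneg[OF strict_gen_gen_real[OF g s]] u
    by (intro pseudo_inv_eq_gen_inv[OF g s] sum_nonneg) auto
  finally show ?thesis .
qed

lemma archimedean_copula_nonneg:
  fixes C :: "real^'d \<Rightarrow> real"
  assumes a: "archimedean_copula C \<phi>" and u: "in_unit_cube u"
  shows "0 \<le> C u"
proof -
  have g: "generator \<phi>" using archimedean_copula_generator[OF a] .
  have "0 \<le> (\<Sum>k\<in>UNIV. \<phi> (u$k))"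
    using u generator_nonneg[OF g] unfolding in_unit_cube_def by (intro sum_nonneg) auto
  then have "1 \<in> {t \<in> {0..1}. \<phi> t \<le> (\<Sum>k\<in>UNIV. \<phi> (u$k))}" using generator_one[OF g] by auto
  then have "0 \<le> pseudo_inv \<phi> (\<Sum>k\<in>UNIV. \<phi> (u$k))"
    unfolding pseudo_inv_def by (intro cInf_greatest) auto
  moreover have "C u = pseudo_inv \<phi> (\<Sum>k\<in>UNIV. \<phi> (u$k))"
    using a u unfolding archimedean_copula_def by blast
  ultimately show ?thesis by simp
qed

lemma archimedean_copula_eventually_0:
  fixes C :: "real^'d \<Rightarrow> real"
  assumes a: "archimedean_copula C \<phi>" and s: "\<phi> 0 \<noteq> \<infinity>" and pq: "(p::'d) \<noteq> q"
  shows "\<exists>\<delta>>0. \<forall>u. in_unit_cube u \<and> (\<forall>k. u$k < \<delta>) \<longrightarrow> C u = 0"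
proof -
  have g: "generator \<phi>" using archimedean_copula_generator[OF a] .
  obtain c where c: "\<phi> 0 = ereal c"
    using s generator_nonneg[OF g, of 0] by (cases "\<phi> 0") auto
  have "c > 0" using generator_less[OF g, of 0 1] generator_one[OF g] c by simp
  then have "eventually (\<lambda>x. ereal (c/2) < \<phi> x) (at_right (0::real))"
    using order_tendstoD(1)[OF tendsto_generator_at_right_0[OF g], of "ereal (c/2)"] c by simp
  then obtain \<delta> where \<delta>: "\<delta> > 0" "\<And>y. y > 0 \<Longrightarrow> y < \<delta> \<Longrightarrow> ereal (c/2) < \<phi> y"
    unfolding eventually_at_right_field by blast
  show ?thesis
  proof (intro exI[of _ \<delta>] conjI allI impI)
    fix u :: "real^'d" assume u: "in_unit_cube u \<and> (\<forall>k. u$k < \<delta>)"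
    have big: "ereal (c/2) \<le> \<phi> (u$k)" for k
      using \<delta>(2)[of "u$k"] u c \<open>c > 0\<close> unfolding in_unit_cube_def
      by (cases "u$k = 0") (auto simp: less_le)
    \<comment> \<open>two small coordinates already push the sum past the finite value \<phi> 0\<close>
    have "\<phi> 0 = ereal (c/2) + ereal (c/2)" using c by simp
    also have "\<dots> \<le> \<phi> (u$p) + \<phi> (u$q)" by (intro add_mono big)
    also have "\<dots> = (\<Sum>k\<in>{p,q}. \<phi> (u$k))" using pq by simp
    also have "\<dots> \<le> (\<Sum>k\<in>UNIV. \<phi> (u$k))"
      using u generator_nonneg[OF g] unfolding in_unit_cube_def by (intro sum_mono2) auto
    finally have "\<phi> 0 \<le> (\<Sum>k\<in>UNIV. \<phi> (u$k))" .
    then have "pseudo_inv \<phi> (\<Sum>k\<in>UNIV. \<phi> (u$k)) = 0"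
      unfolding pseudo_inv_def by (intro cInf_eq_minimum) auto
    moreover have "C u = pseudo_inv \<phi> (\<Sum>k\<in>UNIV. \<phi> (u$k))"
      using a u unfolding archimedean_copula_def by blast
    ultimately show "C u = 0" by simp
  qed (rule \<delta>(1))
qed

lemma archimedean_copula_bivariate:
  fixes C :: "real^'d \<Rightarrow> real"
  assumes a: "archimedean_copula C \<phi>" and s: "\<phi> 0 = \<infinity>" and pq: "p \<noteq> q"
    and x: "0 < x" "x \<le> 1" and y: "0 < y" "y \<le> 1"
  shows "C (\<chi> i. if i = p then x else if i = q then y else 1)
    = gen_inv (gen_real \<phi>) (gen_real \<phi> x + gen_real \<phi> y)"
proof -
  let ?u = "(\<chi> i. if i = p then x else if i = q then y else 1) :: real^'d"
  have g: "generator \<phi>" using archimedean_copula_generator[OF a] .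
  have "(\<Sum>k\<in>UNIV. gen_real \<phi> (?u $ k)) = (\<Sum>k\<in>{p,q}. gen_real \<phi> (?u $ k))"
    using strict_gen_one[OF strict_gen_gen_real[OF g s]] by (intro sum.mono_neutral_right) auto
  also have "\<dots> = gen_real \<phi> x + gen_real \<phi> y" using pq by simp
  finally show ?thesis using archimedean_copula_eq_gen_inv[OF a s, of ?u] x y by simp
qed

lemma gen_inv_rectangle_inequality:
  fixes C :: "real^'d \<Rightarrow> real" and p q :: 'd and \<phi> :: "real \<Rightarrow> ereal"
  defines "\<psi> \<equiv> gen_inv (gen_real \<phi>)" and "f \<equiv> gen_real \<phi>"
  assumes a: "archimedean_copula C \<phi>" and s: "\<phi> 0 = \<infinity>" and pq: "p \<noteq> q"
    and x: "0 < x1" "x1 \<le> x2" "x2 \<le> 1" and y: "0 < y1" "y1 \<le> y2" "y2 \<le> 1"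
  shows "0 \<le> \<psi> (f x2 + f y2) - \<psi> (f x1 + f y2) - \<psi> (f x2 + f y1) + \<psi> (f x1 + f y1)"
proof -
  have cop: "copula C" using a unfolding archimedean_copula_def by blast
  define A where "A = (\<chi> i. if i = p then x1 else if i = q then y1 else (0::real))"
  define B where "B = (\<chi> i. if i = p then x2 else if i = q then y2 else (1::real))"
  define v where "v S = (\<chi> i. if i \<in> S then A$i else B$i)" for S :: "'d set"
  define V where "V x y = (\<chi> i. if i = p then x else if i = q then y else (1::real))" for x y
  have cA: "in_unit_cube A" and cB: "in_unit_cube B" and AB: "\<forall>i. A$i \<le> B$i"
    using x y by (auto simp: in_unit_cube_def A_def B_def)
  have "0 \<le> (\<Sum>S\<in>Pow (UNIV::'d set). (-1) ^ card S * C (v S))"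
    using cop cA cB AB unfolding copula_def d_increasing_def v_def by blast
  \<comment> \<open>vertices with a coordinate outside {p,q} lie on a face where C is grounded\<close>
  also have "\<dots> = (\<Sum>S\<in>Pow {p,q}. (-1) ^ card S * C (v S))"
  proof (rule sum.mono_neutral_right)
    show "\<forall>S\<in>Pow UNIV - Pow {p, q}. (-1) ^ card S * C (v S) = 0"
    proof
      fix S assume "S \<in> Pow (UNIV::'d set) - Pow {p, q}"
      then obtain j where j: "j \<in> S" "j \<noteq> p" "j \<noteq> q" by auto
      have "in_unit_cube (v S)" using cA cB unfolding in_unit_cube_def v_def by auto
      moreover have "(v S)$j = 0" using j by (simp add: v_def A_def)
      ultimately have "C (v S) = 0" using cop unfolding copula_def grounded_def by blast
      then show "(-1) ^ card S * C (v S) = 0" by simp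
    qed
  qed auto
  also have "Pow {p,q} = {{}, {p}, {q}, {p,q}}" by auto
  also have "(\<Sum>S\<in>{{}, {p}, {q}, {p,q}}. (-1) ^ card S * C (v S))
      = C (V x2 y2) - C (V x1 y2) - C (V x2 y1) + C (V x1 y1)"
  proof -
    have "v {} = V x2 y2" "v {p} = V x1 y2" "v {q} = V x2 y1" "v {p,q} = V x1 y1"
      using pq by (auto simp: vec_eq_iff v_def V_def A_def B_def)
    then show ?thesis using pq by simp
  qed
  also have "\<dots> = \<psi> (f x2 + f y2) - \<psi> (f x1 + f y2) - \<psi> (f x2 + f y1) + \<psi> (f x1 + f y1)"
    using x y unfolding V_def \<psi>_def f_def by (simp add: archimedean_copula_bivariate[OF a s pq])
  finally show ?thesis .
qed

lemma two_distinct_elements: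
  assumes "CARD('d) \<ge> 2"
  obtains p q :: 'd where "p \<noteq> q"
proof -
  obtain p :: 'd where True by blast
  have "\<not> UNIV \<subseteq> {p}"
    using card_mono[of "{p}" "UNIV :: 'd set"] assms by auto
  then obtain q where "q \<noteq> p" by blast
  then show ?thesis using that by blast
qed

lemma convex_on_gen_inv_archimedean:
  fixes C :: "real^'d \<Rightarrow> real"
  assumes a: "archimedean_copula C \<phi>" and s: "\<phi> 0 = \<infinity>" and d: "CARD('d) \<ge> 2"
  shows "convex_on {0..} (gen_inv (gen_real \<phi>))"
proof -
  obtain p q :: 'd where pq: "p \<noteq> q" using two_distinct_elements[OF d] by blast
  have g: "generator \<phi>" using archimedean_copula_generator[OF a] .
  define f where "f = gen_real \<phi>"
  have f: "strict_gen f" unfolding f_def by (rule strict_gen_gen_real[OF g s])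
  \<comment> \<open>the rectangle inequality on the square [x1,x2]^2 with f x1 = Y/2, f x2 = X/2\<close>
  have mid: "gen_inv f ((X + Y) / 2) \<le> (gen_inv f X + gen_inv f Y) / 2"
    if XY: "0 \<le> X" "X \<le> Y" for X Y
  proof -
    define x1 where "x1 = gen_inv f (Y/2)"
    define x2 where "x2 = gen_inv f (X/2)"
    have h: "0 < x1" "x1 \<le> x2" "x2 \<le> 1" "f x1 = Y/2" "f x2 = X/2"
      using gen_inv[OF f, of "Y/2"] gen_inv[OF f, of "X/2"] gen_inv_le_iff[OF f, of "Y/2" "X/2"] XY
      by (auto simp: x1_def x2_def)
    have "0 \<le> gen_inv f (f x2 + f x2) - gen_inv f (f x1 + f x2)
        - gen_inv f (f x2 + f x1) + gen_inv f (f x1 + f x1)"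
      using gen_inv_rectangle_inequality[OF a s pq h(1-3) h(1-3)] unfolding f_def by simp
    then show ?thesis unfolding h by (simp add: add.commute add_divide_distrib)
  qed
  show ?thesis unfolding f_def[symmetric]
  proof (rule midpoint_convex_imp_convex_on)
    show "continuous_on {a..b} (gen_inv f)" if "a \<in> {0..}" "b \<in> {0..}" for a b
    proof (cases "a < b")
      case False
      then have "{a..b} \<subseteq> {a}" by auto
      then show ?thesis using continuous_on_subset continuous_on_sing by blast
    qed (use continuous_on_gen_inv[OF f, of a b] that in auto)
    show "gen_inv f ((X + Y) / 2) \<le> (gen_inv f X + gen_inv f Y) / 2"
      if "X \<in> {0..}" "Y \<in> {0..}" for X Y
      using mid[of X Y] mid[of Y X] that by (cases "X \<le> Y") (auto simp: add.commute)
  qed simp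
qed

section \<open>Regular variation\<close>

text \<open>The limit of \<phi>(l s) / \<phi>(s) as s \<rightarrow> 0+ for \<phi> regularly varying with index -\<alpha>.\<close>

definition rv_ratio :: "ereal \<Rightarrow> real \<Rightarrow> ereal" where
  "rv_ratio \<alpha> l = (if \<alpha> = \<infinity> then (if l < 1 then \<infinity> else if l = 1 then 1 else 0)
                    else ereal (l powr (- real_of_ereal \<alpha>)))"

lemma regularly_varying_at0_nonneg: "regularly_varying_at0 \<phi> \<alpha> \<Longrightarrow> 0 \<le> \<alpha>"
  unfolding regularly_varying_at0_def by blast

lemma tendsto_rv_ratio:
  assumes rv: "regularly_varying_at0 \<phi> \<alpha>" and l: "l > 0"
  shows "((\<lambda>s. ereal (gen_real \<phi> (l * s) / gen_real \<phi> s)) \<longlongrightarrow> rv_ratio \<alpha> l) (at_right 0)"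
proof (cases "\<alpha> = \<infinity>")
  case True
  note r = rv[unfolded regularly_varying_at0_def, THEN conjunct2]
  consider "l < 1" | "l = 1" | "l > 1" by linarith
  then show ?thesis
  proof cases
    case 1
    then have "filterlim (\<lambda>s. gen_real \<phi> (l * s) / gen_real \<phi> s) at_top (at_right 0)"
      using r True l unfolding gen_real_def by simp
    then show ?thesis using True 1 by (simp add: rv_ratio_def tendsto_PInfty_eq_at_top)
  next
    case 2
    then have "((\<lambda>s. gen_real \<phi> (l * s) / gen_real \<phi> s) \<longlongrightarrow> 1) (at_right 0)"
      using r True unfolding gen_real_def by simp
    then show ?thesis using True 2 by (simp add: rv_ratio_def tendsto_ereal one_ereal_def)
  next
    case 3
    then have "((\<lambda>s. gen_real \<phi> (l * s) / gen_real \<phi> s) \<longlongrightarrow> 0) (at_right 0)"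
      using r True unfolding gen_real_def by simp
    then show ?thesis using True 3 by (simp add: rv_ratio_def tendsto_ereal zero_ereal_def)
  qed
next
  case False
  then have "((\<lambda>s. gen_real \<phi> (l * s) / gen_real \<phi> s) \<longlongrightarrow> l powr (- real_of_ereal \<alpha>)) (at_right 0)"
    using rv l unfolding regularly_varying_at0_def gen_real_def by simp
  then show ?thesis using False by (simp add: rv_ratio_def tendsto_ereal)
qed

lemma eventually_at_right_0_less: "(b::real) > 0 \<Longrightarrow> eventually (\<lambda>s. 0 < s \<and> s < b) (at_right 0)"
  unfolding eventually_at_right_field by (intro exI[of _ b]) auto

lemma eventually_at_right_0_imp:
  assumes "eventually P (at_right (0::real))" "0 < b"
  shows "\<exists>\<delta>>0. \<delta> \<le> b \<and> (\<forall>x. 0 < x \<and> x < \<delta> \<longrightarrow> P x)"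
proof -
  obtain \<delta> where "0 < \<delta>" "\<forall>x>0. x < \<delta> \<longrightarrow> P x"
    using assms(1) unfolding eventually_at_right_field by blast
  then show ?thesis using assms(2) by (intro exI[of _ "min \<delta> b"]) auto
qed

lemma eventually_less_ratio:
  assumes f: "strict_gen f" and lim: "((\<lambda>s. ereal (f (l * s) / f s)) \<longlongrightarrow> m) (at_right 0)"
    and c: "ereal c < m"
  shows "eventually (\<lambda>s. c * f s < f (l * s)) (at_right 0)"
  using order_tendstoD(1)[OF lim c] eventually_at_right_0_less[OF zero_less_one]
proof eventually_elim
  case (elim s)
  then have "0 < f s" using strict_gen_pos[OF f] by simp
  then show ?case using elim by (simp add: field_simps)
qed

lemma eventually_ratio_less:
  assumes f: "strict_gen f" and lim: "((\<lambda>s. ereal (f (l * s) / f s)) \<longlongrightarrow> m) (at_right 0)"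
    and c: "m < ereal c"
  shows "eventually (\<lambda>s. f (l * s) < c * f s) (at_right 0)"
  using order_tendstoD(2)[OF lim c] eventually_at_right_0_less[OF zero_less_one]
proof eventually_elim
  case (elim s)
  then have "0 < f s" using strict_gen_pos[OF f] by simp
  then show ?case using elim by (simp add: field_simps)
qed

text \<open>gen_inv f (d * f s) is the diagonal section C(s,...,s) of a d-variate Archimedean copula.\<close>

lemma diag_limit_bounds:
  fixes d L :: real
  assumes f: "strict_gen f" and d: "1 \<le> d" and T: "((\<lambda>s. gen_inv f (d * f s) / s) \<longlongrightarrow> L) (at_right 0)"
  shows "0 \<le> L" "L \<le> 1"
proof -
  have "eventually (\<lambda>s. 0 \<le> gen_inv f (d * f s) / s \<and> gen_inv f (d * f s) / s \<le> 1) (at_right 0)"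
    using eventually_at_right_0_less[OF zero_less_one]
  proof eventually_elim
    case (elim s)
    have "0 \<le> f s" using strict_gen_nonneg[OF f] elim by simp
    then have "0 < gen_inv f (d * f s)" "gen_inv f (d * f s) \<le> s"
      using d elim gen_inv[OF f] by (auto intro!: gen_inv_le[OF f] mult_right_mono[of 1 d, simplified])
    then show ?case using elim by simp
  qed
  then have "eventually (\<lambda>s. 0 \<le> gen_inv f (d * f s) / s) (at_right 0)"
    and "eventually (\<lambda>s. gen_inv f (d * f s) / s \<le> 1) (at_right 0)"
    by (auto elim: eventually_mono)
  then show "0 \<le> L" "L \<le> 1" using tendsto_lowerbound[OF T] tendsto_upperbound[OF T] by simp_all
qed

lemma ratio_le_if_diag_limit_less:
  fixes d L l :: real
  assumes f: "strict_gen f" and d: "0 \<le> d" and T: "((\<lambda>s. gen_inv f (d * f s) / s) \<longlongrightarrow> L) (at_right 0)"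
    and lim: "((\<lambda>s. ereal (f (l * s) / f s)) \<longlongrightarrow> m) (at_right 0)" and l: "0 < l" "l < 1" "L < l"
  shows "m \<le> ereal d"
proof (rule ccontr)
  assume "\<not> m \<le> ereal d"
  then have "ereal d < m" by simp
  from eventually_less_ratio[OF f lim this] eventually_at_right_0_less[OF zero_less_one]
  have "eventually (\<lambda>s. l \<le> gen_inv f (d * f s) / s) (at_right 0)"
  proof eventually_elim
    case (elim s)
    have "0 \<le> f s" "l * s \<le> 1" using strict_gen_nonneg[OF f] elim l by (auto simp: mult_le_one)
    then have "l * s < gen_inv f (d * f s)"
      using less_gen_inv_iff[OF f, of "d * f s" "l * s"] elim l d by simp
    then show ?case using elim by (simp add: field_simps)
  qed
  then have "l \<le> L" using tendsto_lowerbound[OF T] by simp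
  then show False using l by simp
qed

lemma ratio_ge_if_less_diag_limit:
  fixes d L l :: real
  assumes f: "strict_gen f" and d: "0 \<le> d" and T: "((\<lambda>s. gen_inv f (d * f s) / s) \<longlongrightarrow> L) (at_right 0)"
    and lim: "((\<lambda>s. ereal (f (l * s) / f s)) \<longlongrightarrow> m) (at_right 0)" and l: "0 < l" "l < 1" "l < L"
  shows "ereal d \<le> m"
proof (rule ccontr)
  assume "\<not> ereal d \<le> m"
  then have "m < ereal d" by simp
  from eventually_ratio_less[OF f lim this] eventually_at_right_0_less[OF zero_less_one]
  have "eventually (\<lambda>s. gen_inv f (d * f s) / s \<le> l) (at_right 0)"
  proof eventually_elim
    case (elim s)
    have "0 \<le> f s" "l * s \<le> 1" using strict_gen_nonneg[OF f] elim l by (auto simp: mult_le_one)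
    then have "gen_inv f (d * f s) \<le> l * s" using elim l d by (intro gen_inv_le[OF f]) auto
    then show ?case using elim by (simp add: field_simps)
  qed
  then have "L \<le> l" using tendsto_upperbound[OF T] by simp
  then show False using l by simp
qed

lemma rv_ratio_separated_if_diag_limit_less:
  fixes d L1 L2 :: real
  assumes f1: "strict_gen f1" and f2: "strict_gen f2" and d: "1 \<le> d"
    and T1: "((\<lambda>s. gen_inv f1 (d * f1 s) / s) \<longlongrightarrow> L1) (at_right 0)"
    and T2: "((\<lambda>s. gen_inv f2 (d * f2 s) / s) \<longlongrightarrow> L2) (at_right 0)"
    and L: "L1 < L2"
    and lim1: "\<And>l. l > 0 \<Longrightarrow> ((\<lambda>s. ereal (f1 (l * s) / f1 s)) \<longlongrightarrow> m1 l) (at_right 0)"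
    and lim2: "\<And>l. l > 0 \<Longrightarrow> ((\<lambda>s. ereal (f2 (l * s) / f2 s)) \<longlongrightarrow> m2 l) (at_right 0)"
  obtains l l' where "0 < l" "l < l'" "l' < 1" "m1 l \<le> ereal d" "ereal d \<le> m2 l'"
proof
  define l where "l = L1 + (L2 - L1)/3"
  define l' where "l' = L1 + 2*(L2 - L1)/3"
  have "0 \<le> L1" "L2 \<le> 1" using diag_limit_bounds[OF f1 d T1] diag_limit_bounds[OF f2 d T2] by auto
  then show ll: "0 < l" "l < l'" "l' < 1" using L by (auto simp: l_def l'_def field_simps)
  show "m1 l \<le> ereal d"
    by (rule ratio_le_if_diag_limit_less[OF f1 _ T1 lim1]) (use ll d L in \<open>auto simp: l_def\<close>)
  show "ereal d \<le> m2 l'"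
    by (rule ratio_ge_if_less_diag_limit[OF f2 _ T2 lim2]) (use ll d L in \<open>auto simp: l'_def field_simps\<close>)
qed

lemma rv_index_less_if_ratio_separated:
  fixes d l l' :: real
  assumes a1: "0 \<le> \<alpha>1" and a2: "0 \<le> \<alpha>2" and d: "d > 1" and ll: "0 < l" "l < l'" "l' < 1"
    and m1: "rv_ratio \<alpha>1 l \<le> ereal d" and m2: "ereal d \<le> rv_ratio \<alpha>2 l'"
  shows "\<alpha>1 \<noteq> \<infinity>" "\<alpha>1 < \<alpha>2"
proof -
  show n1: "\<alpha>1 \<noteq> \<infinity>" using m1 ll by (auto simp: rv_ratio_def)
  show "\<alpha>1 < \<alpha>2"
  proof (rule ccontr)
    assume "\<not> \<alpha>1 < \<alpha>2"
    then obtain a1 a2 where e: "\<alpha>1 = ereal a1" "\<alpha>2 = ereal a2" "0 \<le> a2" "a2 \<le> a1"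
      using n1 a1 a2 by (cases \<alpha>1; cases \<alpha>2) auto
    have "a2 \<noteq> 0" using m2 d e ll by (auto simp: rv_ratio_def)
    then have "l' powr (- a2) < l powr (- a2)" using e ll by (intro powr_less_mono2_neg) auto
    also have "l powr (- a2) \<le> l powr (- a1)" using e ll by (intro powr_mono') auto
    finally show False using m1 m2 e by (simp add: rv_ratio_def)
  qed
qed

lemma rv_ratio_finite: "\<alpha> \<noteq> \<infinity> \<or> 1 \<le> l \<Longrightarrow> \<exists>m. rv_ratio \<alpha> l = ereal m"
  by (auto simp: rv_ratio_def one_ereal_def zero_ereal_def)

lemma rv_ratio_ge_one:
  assumes "0 \<le> \<alpha>" "\<alpha> \<noteq> \<infinity>" "0 < l" "l \<le> 1"
  obtains m where "rv_ratio \<alpha> l = ereal m" "1 \<le> m"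
proof -
  obtain a where a: "\<alpha> = ereal a" "0 \<le> a" using assms by (cases \<alpha>) auto
  have "l powr 0 \<le> l powr (- a)" using a assms by (intro powr_mono') auto
  then show ?thesis using that a assms by (simp add: rv_ratio_def)
qed

lemma rv_ratio_less_rv_ratio:
  assumes "0 \<le> \<alpha>1" "\<alpha>1 \<noteq> \<infinity>" "\<alpha>1 < \<alpha>2" "0 < l" "l < 1"
  shows "rv_ratio \<alpha>1 l < rv_ratio \<alpha>2 l"
proof -
  obtain a1 where a1: "\<alpha>1 = ereal a1" using assms by (cases \<alpha>1) auto
  show ?thesis
  proof (cases "\<alpha>2 = \<infinity>")
    case False
    then obtain a2 where "\<alpha>2 = ereal a2" "a1 < a2" using assms a1 by (cases \<alpha>2) auto
    moreover have "l powr (- a1) < l powr (- a2)" if "a1 < a2"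
      using that assms by (intro powr_less_mono') auto
    ultimately show ?thesis using a1 by (simp add: rv_ratio_def)
  qed (use a1 assms in \<open>simp add: rv_ratio_def\<close>)
qed

lemma rv_ratio_less_one: "0 < \<alpha> \<Longrightarrow> 1 < l \<Longrightarrow> rv_ratio \<alpha> l < 1"
  by (cases \<alpha>) (auto simp: rv_ratio_def intro!: powr_less_one)

lemma ex_rv_ratio_greater:
  assumes "0 < \<alpha>" "0 < c"
  obtains \<kappa> where "0 < \<kappa>" "\<kappa> < 1" "ereal c < rv_ratio \<alpha> \<kappa>"
proof (cases "\<alpha> = \<infinity>")
  case True
  then show ?thesis using that[of "1/2"] by (simp add: rv_ratio_def)
next
  case False
  then obtain a where a: "\<alpha> = ereal a" "0 < a" using assms by (cases \<alpha>) auto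
  define \<kappa> where "\<kappa> = (c + 1) powr (- 1 / a)"
  have "0 < \<kappa>" "\<kappa> < 1" using a assms by (auto simp: \<kappa>_def intro!: powr_less_one)
  moreover have "\<kappa> powr (- a) = c + 1" using a assms by (simp add: \<kappa>_def powr_powr)
  ultimately show ?thesis using that a by (simp add: rv_ratio_def)
qed

section \<open>Comparison far from the diagonal\<close>

lemma ex_power_bracket:
  fixes q r :: real
  assumes q: "1 < q" and r: "1 \<le> r"
  obtains k where "q ^ k \<le> r" "r < q ^ Suc k"
proof -
  have ex: "\<exists>n. r < q ^ n" using real_arch_pow[OF q] by blast
  define n where "n = (LEAST n. r < q ^ n)"
  have n: "r < q ^ n" unfolding n_def using LeastI_ex[OF ex] .
  have "n \<noteq> 0"
  proof
    assume "n = 0"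
    then show False using n r by simp
  qed
  then obtain k where k: "n = Suc k" by (cases n) auto
  have "q ^ k \<le> r"
    using not_less_Least[of k "\<lambda>n. r < q ^ n"] k by (simp add: n_def not_less)
  then show ?thesis using that n k by blast
qed

lemma halving_iterate_le:
  fixes g :: "real \<Rightarrow> real"
  assumes A: "0 \<le> A" and h: "\<And>x. 0 < x \<Longrightarrow> x < \<delta> \<Longrightarrow> g (x / 2) \<le> A * g x"
    and s: "0 < s" "s < \<delta>"
  shows "g (s / 2 ^ k) \<le> A ^ k * g s"
proof (induction k)
  case (Suc k)
  have "s / 2 ^ k \<le> s" using s by (simp add: divide_le_eq)
  then have "g ((s / 2 ^ k) / 2) \<le> A * g (s / 2 ^ k)" using h[of "s / 2 ^ k"] s by simp
  then have "g (s / 2 ^ Suc k) \<le> A * g (s / 2 ^ k)" by (simp add: field_simps)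
  also have "\<dots> \<le> A * (A ^ k * g s)" using mult_left_mono[OF Suc.IH A] .
  also have "\<dots> = A ^ Suc k * g s" by simp
  finally show ?case .
qed simp

lemma halving_dyadic_bounds:
  assumes f1: "strict_gen f1" and f2: "strict_gen f2" and AB: "0 \<le> A" "0 \<le> B" and \<delta>: "\<delta> \<le> 1"
    and h1: "\<And>x. 0 < x \<Longrightarrow> x < \<delta> \<Longrightarrow> f1 (x / 2) \<le> A * f1 x"
    and h2: "\<And>x. 0 < x \<Longrightarrow> x < \<delta> \<Longrightarrow> B * f2 x \<le> f2 (x / 2)"
    and st: "0 < s" "s < \<delta>" "s / 2 ^ Suc k < t" "t \<le> s / 2 ^ k"
  shows "f1 t \<le> A ^ Suc k * f1 s" "B ^ k * f2 s \<le> f2 t"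
proof -
  have "s / 2 ^ Suc k \<le> s / 2 ^ k" "s / 2 ^ k \<le> s"
    using st by (simp_all add: divide_le_eq field_simps)
  then have s1: "s / 2 ^ k \<le> 1" "s / 2 ^ Suc k \<le> 1" "t \<le> 1" using st \<delta> by linarith+
  have pos: "0 < s / 2 ^ k" "0 < s / 2 ^ Suc k" "0 < t" using st by simp_all
  have "f1 t \<le> f1 (s / 2 ^ Suc k)"
    using strict_gen_le_iff[OF f1 pos(3) s1(3) pos(2) s1(2)] st by simp
  also have "\<dots> \<le> A ^ Suc k * f1 s"
    using halving_iterate_le[of A \<delta> f1 s "Suc k"] h1 AB st by simp
  finally show "f1 t \<le> A ^ Suc k * f1 s" .
  have "B ^ k * f2 s \<le> f2 (s / 2 ^ k)"
    using halving_iterate_le[of B \<delta> "\<lambda>x. - f2 x" s k] h2 AB st by simp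
  also have "\<dots> \<le> f2 t"
    using strict_gen_le_iff[OF f2 pos(1) s1(1) pos(3) s1(3)] st by simp
  finally show "B ^ k * f2 s \<le> f2 t" .
qed

lemma halving_potter_bound:
  assumes f1: "strict_gen f1" and f2: "strict_gen f2" and AB: "1 \<le> A" "A < B"
    and \<delta>: "0 < \<delta>" "\<delta> \<le> 1"
    and h1: "\<And>x. 0 < x \<Longrightarrow> x < \<delta> \<Longrightarrow> f1 (x / 2) \<le> A * f1 x"
    and h2: "\<And>x. 0 < x \<Longrightarrow> x < \<delta> \<Longrightarrow> B * f2 x \<le> f2 (x / 2)"
    and D: "D > 0"
  obtains R where "R \<ge> 1"
    "\<And>s t. 0 < s \<Longrightarrow> s < \<delta> \<Longrightarrow> 0 < t \<Longrightarrow> t \<le> s / R \<Longrightarrow> f1 t * f2 s \<le> D * f1 s * f2 t"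
proof -
  have "A / B < 1" "0 < A / B" using AB by auto
  then obtain k0 where k0: "(A / B) ^ k0 < D / A"
    using real_arch_pow_inv[of "D / A" "A / B"] D AB by auto
  have bound: "f1 t * f2 s \<le> D * f1 s * f2 t"
    if st: "0 < s" "s < \<delta>" "0 < t" "t \<le> s / 2 ^ k0" for s t
  proof -
    have "2 ^ k0 \<le> s / t" using st by (simp add: field_simps)
    moreover have "1 \<le> (2::real) ^ k0" by simp
    ultimately have "1 \<le> s / t" by linarith
    then obtain k where k: "2 ^ k \<le> s / t" "s / t < 2 ^ Suc k"
      using ex_power_bracket[of 2 "s / t"] by auto
    then have "s / 2 ^ Suc k < t" "t \<le> s / 2 ^ k" using st by (simp_all add: field_simps)
    then have I1: "f1 t \<le> A ^ Suc k * f1 s" and I2: "B ^ k * f2 s \<le> f2 t"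
      using halving_dyadic_bounds[OF f1 f2 _ _ \<delta>(2) h1 h2 st(1,2)] AB by auto
    have "(2::real) ^ k0 < 2 ^ Suc k" using k \<open>2 ^ k0 \<le> s / t\<close> by linarith
    then have "k0 < Suc k" by (rule power_less_imp_less_exp[rotated]) simp
    then have "(A / B) ^ k \<le> (A / B) ^ k0"
      using \<open>A / B < 1\<close> \<open>0 < A / B\<close> by (intro power_decreasing) auto
    then have "(A / B) ^ k \<le> D / A" using k0 by simp
    then have "A * (A / B) ^ k \<le> D" using AB by (simp add: field_simps)
    then have "A * (A / B) ^ k * B ^ k \<le> D * B ^ k" using AB by (intro mult_right_mono) auto
    then have AD: "A ^ Suc k \<le> D * B ^ k" using AB by (simp add: power_divide field_simps)
    have "s / 2 ^ k0 \<le> s / 1" using st by (intro divide_left_mono) auto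
    then have "s \<le> 1" "t \<le> s" using st \<delta> by simp_all
    then have nn: "0 \<le> f1 s" "0 \<le> f2 s" "0 \<le> f1 t"
      using strict_gen_nonneg[OF f1] strict_gen_nonneg[OF f2] st by auto
    have "f1 t * f2 s \<le> (A ^ Suc k * f1 s) * f2 s" using I1 nn by (intro mult_right_mono) auto
    also have "\<dots> = A ^ Suc k * (f1 s * f2 s)" by simp
    also have "\<dots> \<le> (D * B ^ k) * (f1 s * f2 s)" using AD nn by (intro mult_right_mono) auto
    also have "\<dots> = D * f1 s * (B ^ k * f2 s)" by simp
    also have "\<dots> \<le> D * f1 s * f2 t" using I2 nn D by (intro mult_left_mono) auto
    finally show ?thesis .
  qed
  have "(1::real) \<le> 2 ^ k0" by simp
  then show ?thesis using bound by (rule that)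
qed

lemma rv_potter_bound:
  assumes f1: "strict_gen f1" and f2: "strict_gen f2"
    and lim1: "\<And>l. l > 0 \<Longrightarrow> ((\<lambda>s. ereal (f1 (l * s) / f1 s)) \<longlongrightarrow> rv_ratio \<alpha>1 l) (at_right 0)"
    and lim2: "\<And>l. l > 0 \<Longrightarrow> ((\<lambda>s. ereal (f2 (l * s) / f2 s)) \<longlongrightarrow> rv_ratio \<alpha>2 l) (at_right 0)"
    and \<alpha>: "0 \<le> \<alpha>1" "\<alpha>1 \<noteq> \<infinity>" "\<alpha>1 < \<alpha>2" and D: "D > 0"
  obtains R \<delta> where "R \<ge> 1" "0 < \<delta>" "\<delta> \<le> 1"
    "\<And>s t. 0 < s \<Longrightarrow> s < \<delta> \<Longrightarrow> 0 < t \<Longrightarrow> t \<le> s / R \<Longrightarrow> f1 t * f2 s \<le> D * f1 s * f2 t"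
proof -
  obtain A0 where A0: "rv_ratio \<alpha>1 (1/2) = ereal A0" "1 \<le> A0"
    using rv_ratio_ge_one[OF \<alpha>(1,2), of "1/2"] by auto
  have "ereal A0 < rv_ratio \<alpha>2 (1/2)" using rv_ratio_less_rv_ratio[OF \<alpha>, of "1/2"] A0 by simp
  then obtain A B where AB: "ereal A0 < ereal A" "ereal A < ereal B" "ereal B < rv_ratio \<alpha>2 (1/2)"
    by (meson ereal_dense2)
  have ev: "eventually (\<lambda>x. f1 (1/2 * x) < A * f1 x \<and> B * f2 x < f2 (1/2 * x)) (at_right 0)"
    using eventually_ratio_less[OF f1 lim1[of "1/2"]] eventually_less_ratio[OF f2 lim2[of "1/2"]] AB A0
    by (intro eventually_conj) simp_all
  from eventually_at_right_0_imp[OF ev zero_less_one] obtain \<delta> where \<delta>: "0 < \<delta>" "\<delta> \<le> 1"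
    and h: "\<forall>x. 0 < x \<and> x < \<delta> \<longrightarrow> f1 (1/2 * x) < A * f1 x \<and> B * f2 x < f2 (1/2 * x)"
    by blast
  have h1: "f1 (x / 2) \<le> A * f1 x" and h2: "B * f2 x \<le> f2 (x / 2)" if "0 < x" "x < \<delta>" for x
    using h[rule_format, OF conjI[OF that]] by (simp_all add: less_imp_le)
  have "1 \<le> A" "A < B" using AB A0 by simp_all
  from halving_potter_bound[OF f1 f2 this \<delta> h1 h2 D] obtain R where R: "R \<ge> 1"
    "\<And>s t. 0 < s \<Longrightarrow> s < \<delta> \<Longrightarrow> 0 < t \<Longrightarrow> t \<le> s / R \<Longrightarrow> f1 t * f2 s \<le> D * f1 s * f2 t"
    by blast
  show ?thesis by (rule that[OF R(1) \<delta> R(2)])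
qed

lemma convex_strict_gen_halving_slope:
  assumes f: "strict_gen f" and cv: "convex_on {0<..1} f"
    and a: "0 < b" "b < a" "a < t" "t \<le> 1" and K: "f (b / 2) \<le> K * f t"
  shows "a * (f a - f t) \<le> 2 * ((t - a) * (K * f t))"
proof -
  have "a * (f a - f t) = 2 * ((a - a/2) * (f a - f t))" by (simp add: field_simps)
  also have "(a - a/2) * (f a - f t) \<le> (t - a) * (f (a/2) - f a)"
    using convex_on_slope_cross[OF cv, of "a/2" t a] a by simp
  also have "\<dots> \<le> (t - a) * (K * f t)"
  proof (rule mult_left_mono)
    have "f (a/2) \<le> f (b / 2)" using strict_gen_le_iff[OF f, of "a/2" "b/2"] a by simp
    then show "f (a/2) - f a \<le> K * f t" using K strict_gen_nonneg[OF f, of a] a by simp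
  qed (use a in simp)
  finally show ?thesis by simp
qed

lemma convex_on_doubling_slope:
  assumes cv: "convex_on {0<..1} f"
    and a: "0 < a" "a < t" "2 * t \<le> 1" and c: "f (2 * t) \<le> (1 - c) * f t"
  shows "(t - a) * (c * f t) \<le> t * (f a - f t)"
proof -
  have "(t - a) * (c * f t) \<le> (t - a) * (f t - f (2 * t))"
    using c a by (intro mult_left_mono) (auto simp: algebra_simps)
  also have "\<dots> \<le> (2 * t - t) * (f a - f t)"
    using convex_on_slope_cross[OF cv, of a "2 * t" t] a by simp
  finally show ?thesis by simp
qed

lemma far_from_diagonal_bound:
  assumes f1: "strict_gen f1" and f2: "strict_gen f2"
    and cv1: "convex_on {0<..1} f1" and cv2: "convex_on {0<..1} f2"
    and st: "0 < t" "t \<le> s" "s \<le> 1/2"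
    and \<kappa>: "0 < \<kappa>" "\<kappa> < 1" "2 * f2 t < f2 (\<kappa> * t)"
    and K: "0 < K" "f1 (\<kappa> * t / 2) \<le> K * f1 t"
    and c: "0 < c" "f2 (2 * t) \<le> (1 - c) * f2 t"
    and potter: "f1 t * f2 s \<le> (\<kappa> * c / (2 * K)) * f1 s * f2 t"
  shows "f1 (gen_inv f2 (f2 s + f2 t)) \<le> f1 s + f1 t"
proof -
  have nn: "0 \<le> f1 s" "0 < f1 t" "0 < f2 s" "0 < f2 t"
    using strict_gen_nonneg[OF f1] strict_gen_pos[OF f1] strict_gen_pos[OF f2] st by auto
  define a where "a = gen_inv f2 (f2 s + f2 t)"
  have a: "0 < a" "a \<le> 1" "f2 a = f2 s + f2 t"
    using gen_inv[OF f2, of "f2 s + f2 t"] nn by (auto simp: a_def)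
  then have "a \<le> t" using strict_gen_le_iff[OF f2 st(1) _ a(1,2)] nn st by simp
  show ?thesis
  proof (cases "a = t \<or> f1 a - f1 t \<le> 0")
    case True
    then show ?thesis using nn by (auto simp: a_def)
  next
    case False
    then have "a < t" and G: "0 < f1 a - f1 t" using \<open>a \<le> t\<close> by auto
    have "f2 s \<le> f2 t" using strict_gen_le_iff[OF f2, of s t] st by simp
    then have "f2 a < f2 (\<kappa> * t)" using a(3) \<kappa>(3) by simp
    then have "\<kappa> * t < a"
      using strict_gen_less_iff[OF f2 a(1,2), of "\<kappa> * t"] \<kappa> st a by (simp add: mult_le_one less_imp_le)
    then have "\<kappa> * t * (f1 a - f1 t) \<le> a * (f1 a - f1 t)" using G by simp
    also have "\<dots> \<le> 2 * ((t - a) * (K * f1 t))"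
      using convex_strict_gen_halving_slope[OF f1 cv1 _ \<open>\<kappa> * t < a\<close> \<open>a < t\<close>] K \<kappa> st by simp
    finally have i1: "\<kappa> * t * (f1 a - f1 t) \<le> 2 * ((t - a) * (K * f1 t))" .
    have i2: "(t - a) * (c * f2 t) \<le> t * f2 s"
      using convex_on_doubling_slope[OF cv2 a(1) \<open>a < t\<close> _ c(2)] a(3) st by simp
    have "t * (\<kappa> * c * f2 t * (f1 a - f1 t)) = (\<kappa> * t * (f1 a - f1 t)) * (c * f2 t)"
      by (simp add: algebra_simps)
    also have "\<dots> \<le> (2 * ((t - a) * (K * f1 t))) * (c * f2 t)"
      using i1 c nn by (intro mult_right_mono) auto
    also have "\<dots> = 2 * K * f1 t * ((t - a) * (c * f2 t))" by (simp add: algebra_simps)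
    also have "\<dots> \<le> 2 * K * f1 t * (t * f2 s)" using i2 K nn by (intro mult_left_mono) auto
    also have "\<dots> = t * (2 * K * (f1 t * f2 s))" by (simp add: algebra_simps)
    also have "\<dots> \<le> t * (2 * K * ((\<kappa> * c / (2 * K)) * f1 s * f2 t))"
      using potter K st by (intro mult_left_mono) auto
    also have "\<dots> = t * (\<kappa> * c * f2 t * f1 s)" using K by simp
    finally have "\<kappa> * c * f2 t * (f1 a - f1 t) \<le> \<kappa> * c * f2 t * f1 s" using st by simp
    then have "f1 a - f1 t \<le> f1 s" using \<kappa> c nn by simp
    then show ?thesis by (simp add: a_def)
  qed
qed

lemma rv_scaling_constants:
  assumes f1: "strict_gen f1" and f2: "strict_gen f2"
    and lim1: "\<And>l. l > 0 \<Longrightarrow> ((\<lambda>s. ereal (f1 (l * s) / f1 s)) \<longlongrightarrow> rv_ratio \<alpha>1 l) (at_right 0)"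
    and lim2: "\<And>l. l > 0 \<Longrightarrow> ((\<lambda>s. ereal (f2 (l * s) / f2 s)) \<longlongrightarrow> rv_ratio \<alpha>2 l) (at_right 0)"
    and \<alpha>: "\<alpha>1 \<noteq> \<infinity>" "0 < \<alpha>2"
  obtains \<kappa> K c \<delta> where "0 < \<kappa>" "\<kappa> < 1" "0 < K" "0 < c" "0 < \<delta>" "\<delta> \<le> 1/2"
    "\<And>x. 0 < x \<Longrightarrow> x < \<delta> \<Longrightarrow> 2 * f2 x < f2 (\<kappa> * x)"
    "\<And>x. 0 < x \<Longrightarrow> x < \<delta> \<Longrightarrow> f1 (\<kappa> * x / 2) \<le> K * f1 x"
    "\<And>x. 0 < x \<Longrightarrow> x < \<delta> \<Longrightarrow> f2 (2 * x) \<le> (1 - c) * f2 x"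
proof -
  obtain \<kappa> where \<kappa>: "0 < \<kappa>" "\<kappa> < 1" "ereal 2 < rv_ratio \<alpha>2 \<kappa>"
    using ex_rv_ratio_greater[OF \<alpha>(2), of 2] by auto
  obtain m where m: "rv_ratio \<alpha>1 (\<kappa>/2) = ereal m" using rv_ratio_finite \<alpha>(1) by blast
  define K where "K = max 1 (m + 1)"
  have "m < K" "0 < K" by (auto simp: K_def)
  then have K: "0 < K" "rv_ratio \<alpha>1 (\<kappa>/2) < ereal K" using m by auto
  obtain c0 where c0: "rv_ratio \<alpha>2 2 < ereal c0" "c0 < 1"
    using ereal_dense2[OF rv_ratio_less_one[OF \<alpha>(2), of 2]] by auto
  have "eventually (\<lambda>x. 2 * f2 x < f2 (\<kappa> * x) \<and> f1 (\<kappa>/2 * x) < K * f1 x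
      \<and> f2 (2 * x) < c0 * f2 x) (at_right 0)"
    using eventually_less_ratio[OF f2 lim2[OF \<kappa>(1)] \<kappa>(3)]
      eventually_ratio_less[OF f1 lim1 K(2)] eventually_ratio_less[OF f2 lim2 c0(1)] \<kappa>
    by (intro eventually_conj) simp_all
  from eventually_at_right_0_imp[OF this, of "1/2"] obtain \<delta> where \<delta>: "0 < \<delta>" "\<delta> \<le> 1/2"
    and h: "\<forall>x. 0 < x \<and> x < \<delta> \<longrightarrow> 2 * f2 x < f2 (\<kappa> * x) \<and> f1 (\<kappa>/2 * x) < K * f1 x
      \<and> f2 (2 * x) < c0 * f2 x"
    by auto
  show ?thesis
  proof (rule that[of \<kappa> K "1 - c0" \<delta>])
    fix x assume "0 < x" "x < \<delta>"
    then show "2 * f2 x < f2 (\<kappa> * x)" "f1 (\<kappa> * x / 2) \<le> K * f1 x"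
      "f2 (2 * x) \<le> (1 - (1 - c0)) * f2 x"
      using h by (auto simp: mult.commute less_imp_le)
  qed (use \<kappa> K c0 \<delta> in auto)
qed

lemma far_from_diagonal_superadditive:
  assumes f1: "strict_gen f1" and f2: "strict_gen f2"
    and cv1: "convex_on {0<..1} f1" and cv2: "convex_on {0<..1} f2"
    and lim1: "\<And>l. l > 0 \<Longrightarrow> ((\<lambda>s. ereal (f1 (l * s) / f1 s)) \<longlongrightarrow> rv_ratio \<alpha>1 l) (at_right 0)"
    and lim2: "\<And>l. l > 0 \<Longrightarrow> ((\<lambda>s. ereal (f2 (l * s) / f2 s)) \<longlongrightarrow> rv_ratio \<alpha>2 l) (at_right 0)"
    and \<alpha>: "0 \<le> \<alpha>1" "\<alpha>1 \<noteq> \<infinity>" "\<alpha>1 < \<alpha>2"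
  obtains R \<delta> where "R \<ge> 1" "0 < \<delta>"
    "\<And>s t. 0 < t \<Longrightarrow> t \<le> s / R \<Longrightarrow> s < \<delta> \<Longrightarrow> f1 (gen_inv f2 (f2 s + f2 t)) \<le> f1 s + f1 t"
proof -
  have "0 < \<alpha>2" using \<alpha> by simp
  obtain \<kappa> K c \<delta>0 where \<kappa>: "0 < \<kappa>" "\<kappa> < 1" and "0 < K" "0 < c" "0 < \<delta>0" "\<delta>0 \<le> 1/2"
    and h: "\<And>x. 0 < x \<Longrightarrow> x < \<delta>0 \<Longrightarrow> 2 * f2 x < f2 (\<kappa> * x)"
      "\<And>x. 0 < x \<Longrightarrow> x < \<delta>0 \<Longrightarrow> f1 (\<kappa> * x / 2) \<le> K * f1 x"
      "\<And>x. 0 < x \<Longrightarrow> x < \<delta>0 \<Longrightarrow> f2 (2 * x) \<le> (1 - c) * f2 x"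
    by (rule rv_scaling_constants[OF f1 f2 lim1 lim2 \<alpha>(2) \<open>0 < \<alpha>2\<close>]) (assumption | rule that)+
  define D where "D = \<kappa> * c / (2 * K)"
  have "0 < D" using \<kappa> \<open>0 < c\<close> \<open>0 < K\<close> by (simp add: D_def)
  obtain R \<delta>1 where R: "R \<ge> 1" "0 < \<delta>1" "\<delta>1 \<le> 1"
    and potter: "\<And>s t. 0 < s \<Longrightarrow> s < \<delta>1 \<Longrightarrow> 0 < t \<Longrightarrow> t \<le> s / R \<Longrightarrow> f1 t * f2 s \<le> D * f1 s * f2 t"
    by (rule rv_potter_bound[OF f1 f2 lim1 lim2 \<alpha> \<open>0 < D\<close>]) (assumption | rule that)+
  have bound: "f1 (gen_inv f2 (f2 s + f2 t)) \<le> f1 s + f1 t"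
    if st: "0 < t" "t \<le> s / R" "s < min \<delta>0 \<delta>1" for s t
  proof -
    have "0 < s / R" using st by linarith
    then have "0 < s" using R by (simp add: zero_less_divide_iff)
    then have "s / R \<le> s / 1" using R by (intro divide_left_mono) auto
    then have "t \<le> s" and "t < \<delta>0" using st by simp_all
    show ?thesis
    proof (rule far_from_diagonal_bound[OF f1 f2 cv1 cv2 st(1) \<open>t \<le> s\<close> _ \<kappa> h(1) \<open>0 < K\<close> h(2)
          \<open>0 < c\<close> h(3)])
      show "s \<le> 1/2" using st \<open>\<delta>0 \<le> 1/2\<close> by simp
      show "f1 t * f2 s \<le> \<kappa> * c / (2 * K) * f1 s * f2 t"
        using potter[of s t] st \<open>0 < s\<close> by (simp add: D_def)
    qed (use st \<open>t < \<delta>0\<close> in auto)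
  qed
  have "0 < min \<delta>0 \<delta>1" using \<open>0 < \<delta>0\<close> R by simp
  with R(1) show ?thesis using bound by (rule that)
qed

section \<open>Comparison near the diagonal\<close>

text \<open>The limit of \<psi>(\<phi>(r x) + \<phi> x) / x as x \<rightarrow> 0+, for \<phi> regularly varying with index -\<alpha>
  and r \<ge> 1: the tail dependence function of a Clayton copula, evaluated at (r,1).\<close>

definition clayton_tdf :: "ereal \<Rightarrow> real \<Rightarrow> real" where
  "clayton_tdf \<alpha> r = (if \<alpha> = 0 then 0 else if \<alpha> = \<infinity> then 1
     else (1 + r powr (- real_of_ereal \<alpha>)) powr (- 1 / real_of_ereal \<alpha>))"

lemma clayton_tdf_ereal: "0 < a \<Longrightarrow> clayton_tdf (ereal a) r = (1 + r powr (- a)) powr (- 1 / a)"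
  by (simp add: clayton_tdf_def)

lemma powr_powr_inverse: "0 < a \<Longrightarrow> 0 < X \<Longrightarrow> (X powr (- 1 / a)) powr (- a) = (X::real)"
  by (simp add: powr_powr)

lemma clayton_tdf_bounds:
  assumes "0 < a" "0 < r"
  shows "0 < clayton_tdf (ereal a) r" "clayton_tdf (ereal a) r < 1"
proof -
  have b: "1 < 1 + r powr (- a)" using assms by simp
  show "0 < clayton_tdf (ereal a) r"
    unfolding clayton_tdf_ereal[OF assms(1)] by (rule powr_gt_zero[THEN iffD2]) (use b in linarith)
  show "clayton_tdf (ereal a) r < 1"
    unfolding clayton_tdf_ereal[OF assms(1)] using assms b by (intro powr_less_one) auto
qed

lemma clayton_tdf_nonneg: "0 < r \<Longrightarrow> 0 \<le> clayton_tdf \<alpha> r"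
  using clayton_tdf_bounds[of _ r] by (cases \<alpha>) (auto simp: clayton_tdf_def less_imp_le)

lemma clayton_tdf_le_one: "0 \<le> \<alpha> \<Longrightarrow> 0 < r \<Longrightarrow> clayton_tdf \<alpha> r \<le> 1"
  using clayton_tdf_bounds[of _ r] by (cases \<alpha>) (auto simp: clayton_tdf_def less_imp_le)

lemma continuous_on_clayton_tdf: "0 \<le> \<alpha> \<Longrightarrow> continuous_on {1..R} (clayton_tdf \<alpha>)"
proof (cases "\<alpha> = 0 \<or> \<alpha> = \<infinity>")
  case False
  assume "0 \<le> \<alpha>"
  then obtain a where a: "\<alpha> = ereal a" "0 < a" using False by (cases \<alpha>) auto
  have "0 < 1 + r powr (- a)" for r :: real using powr_ge_zero[of r "- a"] by linarith
  then have "continuous_on {1..R} (\<lambda>r. (1 + r powr (- a)) powr (- 1 / a))"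
    by (intro continuous_intros) (auto simp: less_imp_neq[symmetric])
  then show ?thesis using a by (simp add: clayton_tdf_ereal)
qed (auto simp: clayton_tdf_def)

lemma one_plus_powr_less:
  fixes z p :: real
  assumes z: "0 < z" and p: "1 < p"
  shows "1 + z powr p < (1 + z) powr p"
proof -
  have "(1 + z) powr p = (1 + z) * (1 + z) powr (p - 1)" and "z powr p = z * z powr (p - 1)"
    using z by (simp_all add: powr_diff)
  moreover have "1 < (1 + z) powr (p - 1)" using z p by (intro gr_one_powr) auto
  moreover have "z * z powr (p - 1) < z * (1 + z) powr (p - 1)"
    using z p by (intro mult_strict_left_mono powr_less_mono2) auto
  ultimately show ?thesis by (simp add: algebra_simps)
qed

lemma clayton_tdf_less_clayton_tdf:
  assumes \<alpha>: "0 \<le> \<alpha>1" "\<alpha>1 \<noteq> \<infinity>" "\<alpha>1 < \<alpha>2" and r: "0 < r"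
  shows "clayton_tdf \<alpha>1 r < clayton_tdf \<alpha>2 r"
proof (cases "\<alpha>1 = 0 \<or> \<alpha>2 = \<infinity>")
  case True
  then show ?thesis using \<alpha> clayton_tdf_bounds[OF _ r] by (cases \<alpha>1; cases \<alpha>2) (auto simp: clayton_tdf_def)
next
  case False
  then obtain a1 a2 where a: "\<alpha>1 = ereal a1" "\<alpha>2 = ereal a2" "0 < a1" "a1 < a2"
    using \<alpha> by (cases \<alpha>1; cases \<alpha>2) auto
  \<comment> \<open>with z = r^-a1 and p = a2/a1 both sides are powers of 1 + z^p and (1 + z)^p\<close>
  define p where "p = a2 / a1"
  define z where "z = r powr (- a1)"
  have p: "1 < p" and z: "0 < z" using a r by (simp_all add: p_def z_def)
  have "clayton_tdf \<alpha>1 r = ((1 + z) powr p) powr (- 1 / a2)"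
    using a z by (simp add: clayton_tdf_ereal z_def powr_powr p_def)
  also have "\<dots> < (1 + z powr p) powr (- 1 / a2)"
    using one_plus_powr_less[OF z p] a z by (intro powr_less_mono2_neg) (auto intro: add_pos_nonneg)
  also have "\<dots> = clayton_tdf \<alpha>2 r"
    using a r by (simp add: clayton_tdf_ereal z_def p_def powr_powr)
  finally show ?thesis .
qed

lemma clayton_tdf_mult_le:
  assumes "0 \<le> \<alpha>" "\<alpha> \<noteq> \<infinity>" "0 < r" "1 \<le> q"
  shows "clayton_tdf \<alpha> (q * r) \<le> q * clayton_tdf \<alpha> r"
proof (cases "\<alpha> = 0")
  case False
  then obtain a where a: "\<alpha> = ereal a" "0 < a" using assms by (cases \<alpha>) auto
  have "q powr (- a) \<le> q powr 0" using assms a by (intro powr_mono) auto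
  then have "q powr (- a) \<le> 1" using assms by simp
  then have "q powr (- a) * (1 + r powr (- a)) \<le> 1 + (q * r) powr (- a)"
    using assms by (simp add: powr_mult algebra_simps)
  moreover have "0 < q powr (- a) * (1 + r powr (- a))" using assms by (simp add: add_pos_nonneg)
  ultimately have "(1 + (q * r) powr (- a)) powr (- 1 / a)
      \<le> (q powr (- a) * (1 + r powr (- a))) powr (- 1 / a)"
    using a by (intro powr_mono2') auto
  also have "\<dots> = q * (1 + r powr (- a)) powr (- 1 / a)"
    using assms a by (simp add: powr_mult add_nonneg_nonneg powr_powr)
  finally show ?thesis using a by (simp add: clayton_tdf_ereal)
qed (simp add: clayton_tdf_def)

lemma ex_uniform_clayton_gap:
  assumes \<alpha>: "0 \<le> \<alpha>1" "\<alpha>1 \<noteq> \<infinity>" "\<alpha>1 < \<alpha>2" and R: "1 \<le> R"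
  obtains q where "1 < q" "\<And>r. r \<in> {1..R} \<Longrightarrow> q * clayton_tdf \<alpha>1 r < clayton_tdf \<alpha>2 r"
proof -
  have "continuous_on {1..R} (\<lambda>r. clayton_tdf \<alpha>2 r - clayton_tdf \<alpha>1 r)"
    using \<alpha> by (intro continuous_intros continuous_on_clayton_tdf) auto
  then obtain r0 where r0: "r0 \<in> {1..R}"
    "\<And>r. r \<in> {1..R} \<Longrightarrow> clayton_tdf \<alpha>2 r0 - clayton_tdf \<alpha>1 r0 \<le> clayton_tdf \<alpha>2 r - clayton_tdf \<alpha>1 r"
    using continuous_attains_inf[OF compact_Icc, of 1 R] R by force
  define \<epsilon> where "\<epsilon> = clayton_tdf \<alpha>2 r0 - clayton_tdf \<alpha>1 r0"
  have "0 < \<epsilon>" using clayton_tdf_less_clayton_tdf[OF \<alpha>, of r0] r0 by (simp add: \<epsilon>_def)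
  have "(1 + \<epsilon>/2) * clayton_tdf \<alpha>1 r < clayton_tdf \<alpha>2 r" if r: "r \<in> {1..R}" for r
  proof -
    have "(1 + \<epsilon>/2) * clayton_tdf \<alpha>1 r = clayton_tdf \<alpha>1 r + \<epsilon>/2 * clayton_tdf \<alpha>1 r"
      by (simp add: algebra_simps)
    also have "\<dots> \<le> clayton_tdf \<alpha>1 r + \<epsilon>/2 * 1"
      using clayton_tdf_le_one[OF \<alpha>(1), of r] r \<open>0 < \<epsilon>\<close> by (intro add_left_mono mult_left_mono) auto
    also have "\<dots> < clayton_tdf \<alpha>1 r + \<epsilon>" using \<open>0 < \<epsilon>\<close> by simp
    also have "\<dots> \<le> clayton_tdf \<alpha>2 r" using r0(2)[OF r] by (simp add: \<epsilon>_def)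
    finally show ?thesis .
  qed
  then show ?thesis using that[of "1 + \<epsilon>/2"] \<open>0 < \<epsilon>\<close> by simp
qed

lemma rv_ratio_less_if_clayton_tdf_less:
  assumes "0 \<le> \<alpha>" "\<alpha> \<noteq> \<infinity>" "0 < r" "0 < l" "clayton_tdf \<alpha> r < l"
  shows "rv_ratio \<alpha> l < rv_ratio \<alpha> r + 1"
proof (cases "\<alpha> = 0")
  case False
  then obtain a where a: "\<alpha> = ereal a" "0 < a" using assms by (cases \<alpha>) auto
  define X where "X = 1 + r powr (- a)"
  have "0 < X" using assms by (simp add: X_def add_pos_nonneg)
  have "l powr (- a) < (X powr (- 1 / a)) powr (- a)"
    using assms a \<open>0 < X\<close> by (intro powr_less_mono2_neg) (auto simp: clayton_tdf_ereal X_def)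
  also have "\<dots> = X" using powr_powr_inverse[OF a(2) \<open>0 < X\<close>] .
  finally show ?thesis using a by (simp add: rv_ratio_def X_def)
qed (use assms in \<open>simp add: rv_ratio_def one_ereal_def\<close>)

lemma rv_ratio_greater_if_less_clayton_tdf:
  assumes "0 < \<alpha>" "1 \<le> r" "0 < l" "l < clayton_tdf \<alpha> r"
  shows "rv_ratio \<alpha> r + 1 < rv_ratio \<alpha> l"
proof (cases "\<alpha> = \<infinity>")
  case False
  then obtain a where a: "\<alpha> = ereal a" "0 < a" using assms by (cases \<alpha>) auto
  define X where "X = 1 + r powr (- a)"
  have "0 < X" using assms by (simp add: X_def add_pos_nonneg)
  have "X = (X powr (- 1 / a)) powr (- a)" using powr_powr_inverse[OF a(2) \<open>0 < X\<close>] by simp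
  also have "\<dots> < l powr (- a)"
    using assms a \<open>0 < X\<close> by (intro powr_less_mono2_neg) (auto simp: clayton_tdf_ereal X_def)
  finally show ?thesis using a by (simp add: rv_ratio_def X_def)
next
  case True
  then have "l < 1" using assms by (simp add: clayton_tdf_def)
  then show ?thesis using True assms by (auto simp: rv_ratio_def)
qed

lemma gen_inv_sum_mono:
  assumes f: "strict_gen f" and x: "0 < x" "x \<le> 1" and r: "0 < r" "r \<le> r'" "r' * x \<le> 1"
  shows "gen_inv f (f (r * x) + f x) \<le> gen_inv f (f (r' * x) + f x)"
proof -
  have rx: "0 < r * x" "r * x \<le> 1" using x r by (auto intro: order_trans[OF mult_right_mono])
  have "f (r' * x) \<le> f (r * x)"
    using strict_gen_le_iff[OF f, of "r' * x" "r * x"] rx r x by (simp add: mult_right_mono)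
  moreover have "0 \<le> f (r' * x)" "0 \<le> f (r * x)" "0 \<le> f x"
    using strict_gen_nonneg[OF f] rx r x by auto
  ultimately show ?thesis using gen_inv_le_iff[OF f] by simp
qed

lemma eventually_gen_inv_sum_less:
  assumes f: "strict_gen f"
    and lim: "\<And>l. l > 0 \<Longrightarrow> ((\<lambda>s. ereal (f (l * s) / f s)) \<longlongrightarrow> rv_ratio \<alpha> l) (at_right 0)"
    and \<alpha>: "0 \<le> \<alpha>" "\<alpha> \<noteq> \<infinity>" and r: "1 \<le> r" and l: "clayton_tdf \<alpha> r < l"
  shows "eventually (\<lambda>x. gen_inv f (f (r * x) + f x) < l * x) (at_right 0)"
proof -
  have "0 < l" using clayton_tdf_nonneg[of r \<alpha>] r l by simp
  have "0 < r" using r by simp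
  obtain m where m: "rv_ratio \<alpha> r = ereal m" using rv_ratio_finite r by blast
  have "rv_ratio \<alpha> l < ereal m + 1"
    using rv_ratio_less_if_clayton_tdf_less[OF \<alpha> _ \<open>0 < l\<close> l] r m by simp
  then obtain c where c: "rv_ratio \<alpha> l < ereal c" "ereal c < ereal m + 1" by (meson ereal_dense2)
  then have "ereal (c - 1) < ereal m" by simp
  have "0 < 1 / (r + l)" using r \<open>0 < l\<close> by simp
  from eventually_ratio_less[OF f lim[OF \<open>0 < l\<close>] c(1)]
    eventually_less_ratio[OF f lim[OF \<open>0 < r\<close>] \<open>ereal (c - 1) < ereal m\<close>[folded m]] eventually_at_right_0_less[OF this]
  show ?thesis
  proof eventually_elim
    case (elim x)
    then have "0 < x" "l * x + r * x < 1" using r \<open>0 < l\<close> by (auto simp: field_simps)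
    moreover have "x \<le> r * x" "0 < l * x"
      using mult_right_mono[of 1 r x] r \<open>0 < l\<close> \<open>0 < x\<close> by auto
    ultimately have x: "0 < x" "r * x \<le> 1" "l * x \<le> 1" "x \<le> 1" by linarith+
    have "0 \<le> f (r * x)" "0 \<le> f x" using strict_gen_nonneg[OF f] x r by auto
    moreover have "f (l * x) < f (r * x) + f x" using elim by (simp add: algebra_simps)
    ultimately show ?case
      using gen_inv_less[OF f, of "f (r * x) + f x" "l * x"] x \<open>0 < l\<close> by simp
  qed
qed

lemma eventually_less_gen_inv_sum:
  assumes f: "strict_gen f"
    and lim: "\<And>l. l > 0 \<Longrightarrow> ((\<lambda>s. ereal (f (l * s) / f s)) \<longlongrightarrow> rv_ratio \<alpha> l) (at_right 0)"
    and \<alpha>: "0 < \<alpha>" and r: "1 \<le> r" and l: "0 < l" "l < clayton_tdf \<alpha> r"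
  shows "eventually (\<lambda>x. l * x < gen_inv f (f (r * x) + f x)) (at_right 0)"
proof -
  have "l < 1" using clayton_tdf_le_one[of \<alpha> r] \<alpha> r l by (simp add: less_imp_le)
  have "0 < r" using r by simp
  obtain m where m: "rv_ratio \<alpha> r = ereal m" using rv_ratio_finite r by blast
  have "ereal m + 1 < rv_ratio \<alpha> l"
    using rv_ratio_greater_if_less_clayton_tdf[OF \<alpha> r l] m by simp
  then obtain c where c: "ereal c < rv_ratio \<alpha> l" "ereal m + 1 < ereal c" by (meson ereal_dense2)
  then have "ereal m < ereal (c - 1)" by simp
  have "0 < 1 / r" using r by simp
  from eventually_less_ratio[OF f lim[OF l(1)] c(1)]
    eventually_ratio_less[OF f lim[OF \<open>0 < r\<close>] \<open>ereal m < ereal (c - 1)\<close>[folded m]] eventually_at_right_0_less[OF this]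
  show ?thesis
  proof eventually_elim
    case (elim x)
    then have "0 < x" "r * x < 1" using r by (auto simp: field_simps)
    moreover have "x \<le> r * x" "l * x \<le> x"
      using mult_right_mono[of 1 r x] mult_right_mono[of l 1 x] r \<open>l < 1\<close> \<open>0 < x\<close> by auto
    ultimately have x: "0 < x" "r * x \<le> 1" "l * x \<le> 1" "x \<le> 1" by linarith+
    have "0 \<le> f (r * x)" "0 \<le> f x" using strict_gen_nonneg[OF f] x r by auto
    moreover have "f (r * x) + f x < f (l * x)" using elim by (simp add: algebra_simps)
    ultimately show ?case
      using less_gen_inv_iff[OF f, of "f (r * x) + f x" "l * x"] x l by simp
  qed
qed

lemma eventually_grid_cell_comparison:
  assumes f1: "strict_gen f1" and f2: "strict_gen f2"
    and lim1: "\<And>l. l > 0 \<Longrightarrow> ((\<lambda>s. ereal (f1 (l * s) / f1 s)) \<longlongrightarrow> rv_ratio \<alpha>1 l) (at_right 0)"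
    and lim2: "\<And>l. l > 0 \<Longrightarrow> ((\<lambda>s. ereal (f2 (l * s) / f2 s)) \<longlongrightarrow> rv_ratio \<alpha>2 l) (at_right 0)"
    and \<alpha>: "0 \<le> \<alpha>1" "\<alpha>1 \<noteq> \<infinity>" "\<alpha>1 < \<alpha>2"
    and q: "1 \<le> q" and r: "1 \<le> r" and gap: "q * clayton_tdf \<alpha>1 r < clayton_tdf \<alpha>2 r"
  shows "eventually (\<lambda>x. gen_inv f1 (f1 (q * r * x) + f1 x) < gen_inv f2 (f2 (r * x) + f2 x)) (at_right 0)"
proof -
  define l where "l = (q * clayton_tdf \<alpha>1 r + clayton_tdf \<alpha>2 r) / 2"
  have "1 \<le> q * r" using mult_mono[OF q r] q by simp
  have "clayton_tdf \<alpha>1 (q * r) \<le> q * clayton_tdf \<alpha>1 r"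
    using clayton_tdf_mult_le[OF \<alpha>(1,2), of r q] q r by (simp add: mult.commute)
  moreover have "0 \<le> clayton_tdf \<alpha>1 (q * r)" using \<open>1 \<le> q * r\<close> by (simp add: clayton_tdf_nonneg)
  ultimately have l: "clayton_tdf \<alpha>1 (q * r) < l" "0 < l" "l < clayton_tdf \<alpha>2 r"
    using gap by (auto simp: l_def)
  have "0 < \<alpha>2" using \<alpha> by simp
  have "eventually (\<lambda>x. gen_inv f1 (f1 (q * r * x) + f1 x) < l * x) (at_right 0)"
    using eventually_gen_inv_sum_less[OF f1 lim1 \<alpha>(1,2) \<open>1 \<le> q * r\<close> l(1)] by simp
  moreover have "eventually (\<lambda>x. l * x < gen_inv f2 (f2 (r * x) + f2 x)) (at_right 0)"
    using eventually_less_gen_inv_sum[OF f2 lim2 \<open>0 < \<alpha>2\<close> r l(2,3)] by simp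
  ultimately show ?thesis by eventually_elim simp
qed

lemma near_diagonal_comparison:
  assumes f1: "strict_gen f1" and f2: "strict_gen f2"
    and lim1: "\<And>l. l > 0 \<Longrightarrow> ((\<lambda>s. ereal (f1 (l * s) / f1 s)) \<longlongrightarrow> rv_ratio \<alpha>1 l) (at_right 0)"
    and lim2: "\<And>l. l > 0 \<Longrightarrow> ((\<lambda>s. ereal (f2 (l * s) / f2 s)) \<longlongrightarrow> rv_ratio \<alpha>2 l) (at_right 0)"
    and \<alpha>: "0 \<le> \<alpha>1" "\<alpha>1 \<noteq> \<infinity>" "\<alpha>1 < \<alpha>2" and R: "1 \<le> R"
  shows "eventually (\<lambda>x. \<forall>r\<in>{1..R}.
    gen_inv f1 (f1 (r * x) + f1 x) \<le> gen_inv f2 (f2 (r * x) + f2 x)) (at_right 0)"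
proof -
  obtain q where q: "1 < q" "\<And>r. r \<in> {1..R} \<Longrightarrow> q * clayton_tdf \<alpha>1 r < clayton_tdf \<alpha>2 r"
    using ex_uniform_clayton_gap[OF \<alpha> R] by blast
  obtain N where N: "R < q ^ N" using real_arch_pow[OF q(1)] by blast
  \<comment> \<open>compare the two sides on the finitely many grid cells [q^j, q^(j+1)] meeting [1,R]\<close>
  define J where "J = {j. j < N \<and> q ^ j \<le> R}"
  have "eventually (\<lambda>x. gen_inv f1 (f1 (q * q ^ j * x) + f1 x) < gen_inv f2 (f2 (q ^ j * x) + f2 x))
      (at_right 0)" if "j \<in> J" for j
    using that q one_le_power[of q j]
    by (intro eventually_grid_cell_comparison[OF f1 f2 lim1 lim2 \<alpha>]) (auto simp: J_def)
  moreover have "finite J" by (simp add: J_def)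
  ultimately have "eventually (\<lambda>x. \<forall>j\<in>J.
      gen_inv f1 (f1 (q * q ^ j * x) + f1 x) < gen_inv f2 (f2 (q ^ j * x) + f2 x)) (at_right 0)"
    by (simp add: eventually_ball_finite_distrib)
  moreover have "eventually (\<lambda>x. 0 < x \<and> x < 1 / q ^ N) (at_right 0)"
    using q by (intro eventually_at_right_0_less) simp
  ultimately show ?thesis
  proof eventually_elim
    case (elim x)
    have small: "q ^ j * x \<le> 1" if "j \<le> N" for j
    proof -
      have "q ^ j * x \<le> q ^ N * x" using that q elim by (intro mult_right_mono power_increasing) auto
      moreover have "q ^ N * x < 1" using elim q by (simp add: field_simps)
      ultimately show ?thesis by linarith
    qed
    have "x \<le> 1" using small[of 0] by simp
    show ?case
    proof
      fix r assume r: "r \<in> {1..R}"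
      obtain j where j: "q ^ j \<le> r" "r < q * q ^ j" using ex_power_bracket[OF q(1)] r by auto
      have "q ^ j < q ^ N" using j r N by simp
      then have "j < N" by (rule power_less_imp_less_exp[OF q(1)])
      then have "j \<in> J" and cell: "q * q ^ j * x \<le> 1" using j r small[of "Suc j"] by (auto simp: J_def)
      have "r * x \<le> q * q ^ j * x" using j elim by (intro mult_right_mono) auto
      then have "r * x \<le> 1" using cell by linarith
      have "gen_inv f1 (f1 (r * x) + f1 x) \<le> gen_inv f1 (f1 (q * q ^ j * x) + f1 x)"
        using gen_inv_sum_mono[OF f1] elim \<open>x \<le> 1\<close> r j cell by simp
      also have "\<dots> < gen_inv f2 (f2 (q ^ j * x) + f2 x)" using elim \<open>j \<in> J\<close> by blast
      also have "\<dots> \<le> gen_inv f2 (f2 (r * x) + f2 x)"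
        using gen_inv_sum_mono[OF f2] elim \<open>x \<le> 1\<close> j q \<open>r * x \<le> 1\<close> by simp
      finally show "gen_inv f1 (f1 (r * x) + f1 x) \<le> gen_inv f2 (f2 (r * x) + f2 x)" by simp
    qed
  qed
qed

section \<open>Local comparison of the copulas\<close>

lemma gen_inv_le_gen_inv_iff:
  assumes f1: "strict_gen f1" and f2: "strict_gen f2" and A: "0 \<le> A1" "0 \<le> A2"
  shows "gen_inv f1 A1 \<le> gen_inv f2 A2 \<longleftrightarrow> f1 (gen_inv f2 A2) \<le> A1"
  using strict_gen_le_iff[OF f1 gen_inv(1,2)[OF f2 A(2)] gen_inv(1,2)[OF f1 A(1)]] gen_inv(3)[OF f1 A(1)]
  by simp

lemma gen_comparison_near_0:
  assumes f1: "strict_gen f1" and f2: "strict_gen f2"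
    and cv1: "convex_on {0<..1} f1" and cv2: "convex_on {0<..1} f2"
    and lim1: "\<And>l. l > 0 \<Longrightarrow> ((\<lambda>s. ereal (f1 (l * s) / f1 s)) \<longlongrightarrow> rv_ratio \<alpha>1 l) (at_right 0)"
    and lim2: "\<And>l. l > 0 \<Longrightarrow> ((\<lambda>s. ereal (f2 (l * s) / f2 s)) \<longlongrightarrow> rv_ratio \<alpha>2 l) (at_right 0)"
    and \<alpha>: "0 \<le> \<alpha>1" "\<alpha>1 \<noteq> \<infinity>" "\<alpha>1 < \<alpha>2"
  obtains \<epsilon> where "0 < \<epsilon>" "\<epsilon> \<le> 1"
    "\<And>x y. 0 < x \<Longrightarrow> x < \<epsilon> \<Longrightarrow> 0 < y \<Longrightarrow> y < \<epsilon> \<Longrightarrow> f1 (gen_inv f2 (f2 x + f2 y)) \<le> f1 x + f1 y"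
proof -
  obtain R \<delta> where R: "R \<ge> 1" "0 < \<delta>"
    and far: "\<And>s t. 0 < t \<Longrightarrow> t \<le> s / R \<Longrightarrow> s < \<delta> \<Longrightarrow> f1 (gen_inv f2 (f2 s + f2 t)) \<le> f1 s + f1 t"
    by (rule far_from_diagonal_superadditive[OF f1 f2 cv1 cv2 lim1 lim2 \<alpha>]) (assumption | rule that)+
  from eventually_at_right_0_imp[OF near_diagonal_comparison[OF f1 f2 lim1 lim2 \<alpha> R(1)] zero_less_one]
  obtain \<delta>1 where \<delta>1: "0 < \<delta>1" "\<delta>1 \<le> 1" and near: "\<forall>y. 0 < y \<and> y < \<delta>1 \<longrightarrow>
      (\<forall>r\<in>{1..R}. gen_inv f1 (f1 (r * y) + f1 y) \<le> gen_inv f2 (f2 (r * y) + f2 y))"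
    by blast
  define \<epsilon> where "\<epsilon> = min \<delta> \<delta>1"
  have bound: "f1 (gen_inv f2 (f2 x + f2 y)) \<le> f1 x + f1 y"
    if xy: "0 < y" "y \<le> x" "x < \<epsilon>" for x y
  proof (cases "x \<le> R * y")
    case True
    have "x \<le> 1" "y \<le> 1" using xy \<delta>1 by (auto simp: \<epsilon>_def)
    then have nn: "0 \<le> f1 x + f1 y" "0 \<le> f2 x + f2 y"
      using strict_gen_nonneg[OF f1] strict_gen_nonneg[OF f2] xy by (auto intro: add_nonneg_nonneg)
    have "x / y \<in> {1..R}" "x / y * y = x" using True xy by (auto simp: field_simps)
    moreover have "y < \<delta>1" using xy by (simp add: \<epsilon>_def)
    ultimately have "gen_inv f1 (f1 x + f1 y) \<le> gen_inv f2 (f2 x + f2 y)"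
      using near[rule_format, of y "x / y"] xy by simp
    then show ?thesis using gen_inv_le_gen_inv_iff[OF f1 f2 nn] by simp
  next
    case False
    then show ?thesis using far[of y x] R xy by (simp add: \<epsilon>_def field_simps)
  qed
  show ?thesis
  proof (rule that)
    show "0 < \<epsilon>" "\<epsilon> \<le> 1" using R \<delta>1 by (auto simp: \<epsilon>_def)
    show "f1 (gen_inv f2 (f2 x + f2 y)) \<le> f1 x + f1 y" if "0 < x" "x < \<epsilon>" "0 < y" "y < \<epsilon>" for x y
      using bound[of y x] bound[of x y] that by (cases "y \<le> x") (simp_all add: add.commute)
  qed
qed

lemma gen_comparison_sum:
  assumes f1: "strict_gen f1" and f2: "strict_gen f2" and \<epsilon>: "\<epsilon> \<le> 1"
    and pair: "\<And>x y. 0 < x \<Longrightarrow> x < \<epsilon> \<Longrightarrow> 0 < y \<Longrightarrow> y < \<epsilon> \<Longrightarrow>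
      f1 (gen_inv f2 (f2 x + f2 y)) \<le> f1 x + f1 y"
    and S: "finite S" "S \<noteq> {}" and u: "\<And>k. k \<in> S \<Longrightarrow> 0 < u k \<and> u k < \<epsilon>"
  shows "f1 (gen_inv f2 (\<Sum>k\<in>S. f2 (u k))) \<le> (\<Sum>k\<in>S. f1 (u k))"
    and "gen_inv f2 (\<Sum>k\<in>S. f2 (u k)) < \<epsilon>"
  using S u unfolding atomize_conj
proof (induction S rule: finite_ne_induct)
  case (singleton k)
  then show ?case using gen_inv_inverse[OF f2] \<epsilon> by simp
next
  case (insert k S)
  define v where "v = gen_inv f2 (\<Sum>j\<in>S. f2 (u j))"
  have IH: "f1 v \<le> (\<Sum>j\<in>S. f1 (u j))" "v < \<epsilon>" using insert by (auto simp: v_def)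
  have "0 \<le> (\<Sum>j\<in>S. f2 (u j))"
    using insert.prems \<epsilon> strict_gen_nonneg[OF f2] by (intro sum_nonneg) (meson insertCI less_le_trans less_imp_le)
  then have v: "0 < v" "f2 v = (\<Sum>j\<in>S. f2 (u j))" using gen_inv[OF f2] by (auto simp: v_def)
  have uk: "0 < u k" "u k < \<epsilon>" using insert.prems by auto
  have sum: "(\<Sum>j\<in>insert k S. f2 (u j)) = f2 (u k) + f2 v" using insert.hyps v(2) by simp
  have "f1 (gen_inv f2 (f2 (u k) + f2 v)) \<le> f1 (u k) + f1 v" using pair[OF uk v(1) IH(2)] .
  also have "\<dots> \<le> f1 (u k) + (\<Sum>j\<in>S. f1 (u j))" using IH(1) by simp
  finally have "f1 (gen_inv f2 (\<Sum>j\<in>insert k S. f2 (u j))) \<le> (\<Sum>j\<in>insert k S. f1 (u j))"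
    using insert.hyps sum by simp
  moreover have "gen_inv f2 (f2 (u k) + f2 v) \<le> u k"
    using uk \<epsilon> v strict_gen_nonneg[OF f2, of v] strict_gen_nonneg[OF f2, of "u k"] IH(2)
    by (intro gen_inv_le[OF f2]) auto
  ultimately show ?case using sum uk by simp
qed

lemma ball_0_component_less: "u \<in> ball 0 e \<Longrightarrow> (u::real^'d) $ k < e"
  using component_le_norm_cart[of u k] by (simp add: dist_norm)

lemma loc_le_if_nonstrict:
  fixes C1 C2 :: "real^'d \<Rightarrow> real"
  assumes a1: "archimedean_copula C1 \<phi>1" "\<phi>1 0 \<noteq> \<infinity>" and a2: "archimedean_copula C2 \<phi>2"
    and d: "CARD('d) \<ge> 2"
  shows "loc_le C1 C2"
proof -
  obtain p q :: 'd where "p \<noteq> q" using two_distinct_elements[OF d] by blast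
  then obtain \<delta> where "\<delta> > 0" and \<delta>: "\<And>u. in_unit_cube u \<and> (\<forall>k. u$k < \<delta>) \<Longrightarrow> C1 u = 0"
    using archimedean_copula_eventually_0[OF a1] by blast
  show ?thesis
    unfolding loc_le_def
  proof (intro exI[of _ \<delta>] conjI allI impI)
    fix u :: "real^'d" assume u: "u \<in> ball 0 \<delta> \<and> in_unit_cube u"
    then have "C1 u = 0" using \<delta> ball_0_component_less by blast
    then show "C1 u \<le> C2 u" using archimedean_copula_nonneg[OF a2] u by simp
  qed (rule \<open>\<delta> > 0\<close>)
qed

lemma tendsto_diagonal_gen_inv:
  fixes C :: "real^'d \<Rightarrow> real"
  assumes a: "archimedean_copula C \<phi>" and s: "\<phi> 0 = \<infinity>" and T: "has_tail_dep C (\<chi> i. 1) L"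
  shows "((\<lambda>s. gen_inv (gen_real \<phi>) (CARD('d) * gen_real \<phi> s) / s) \<longlongrightarrow> L) (at_right 0)"
proof (rule Lim_transform_eventually)
  show "((\<lambda>s. C (s *\<^sub>R (\<chi> i. 1)) / s) \<longlongrightarrow> L) (at_right 0)" using T by (simp add: has_tail_dep_def)
  show "eventually (\<lambda>s. C (s *\<^sub>R (\<chi> i. 1)) / s
      = gen_inv (gen_real \<phi>) (CARD('d) * gen_real \<phi> s) / s) (at_right 0)"
    using eventually_at_right_0_less[OF zero_less_one]
    by eventually_elim (simp add: archimedean_copula_eq_gen_inv[OF a s])
qed

lemma strict_if_TD_less:
  fixes C1 C2 :: "real^'d \<Rightarrow> real"
  assumes d: "CARD('d) \<ge> 2" and a1: "archimedean_copula C1 \<phi>1" and a2: "archimedean_copula C2 \<phi>2"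
    and td: "TD_less C1 C2"
  shows "\<phi>2 0 = \<infinity>"
proof (rule ccontr)
  assume "\<phi>2 0 \<noteq> \<infinity>"
  define w :: "real^'d" where "w = (\<chi> i. 1)"
  have "\<forall>i. 0 < w $ i" by (simp add: w_def)
  then obtain L1 L2 where "has_tail_dep C1 w L1" "has_tail_dep C2 w L2" "L1 < L2"
    using td unfolding TD_less_def by blast
  then have L: "((\<lambda>s. C1 (s *\<^sub>R w) / s) \<longlongrightarrow> L1) (at_right 0)"
    "((\<lambda>s. C2 (s *\<^sub>R w) / s) \<longlongrightarrow> L2) (at_right 0)" "L1 < L2"
    unfolding has_tail_dep_def by auto
  have cube: "in_unit_cube (s *\<^sub>R w)" if "0 < s" "s < 1" for s
    using that by (simp add: in_unit_cube_def w_def)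
  obtain p q :: 'd where "p \<noteq> q" using two_distinct_elements[OF d] by blast
  then obtain \<delta> where "\<delta> > 0" and \<delta>: "\<And>u. in_unit_cube u \<and> (\<forall>k. u$k < \<delta>) \<Longrightarrow> C2 u = 0"
    using archimedean_copula_eventually_0[OF a2 \<open>\<phi>2 0 \<noteq> \<infinity>\<close>] by blast
  have "eventually (\<lambda>s. 0 \<le> C1 (s *\<^sub>R w) / s) (at_right 0)"
    using eventually_at_right_0_less[OF zero_less_one]
    by eventually_elim (use archimedean_copula_nonneg[OF a1] cube in simp)
  then have "0 \<le> L1" using tendsto_lowerbound[OF L(1)] by simp
  moreover from \<open>\<delta> > 0\<close> have "0 < min \<delta> 1" by simp
  then have "eventually (\<lambda>s. C2 (s *\<^sub>R w) / s = 0) (at_right 0)"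
    by (rule eventually_mono[OF eventually_at_right_0_less]) (use \<delta> cube in \<open>simp add: w_def\<close>)
  then have "L2 = 0" using tendsto_unique[OF _ L(2)] by (simp add: tendsto_eventually)
  ultimately show False using L(3) by simp
qed

lemma loc_le_if_gen_comparison:
  fixes C1 C2 :: "real^'d \<Rightarrow> real"
  assumes a1: "archimedean_copula C1 \<phi>1" "\<phi>1 0 = \<infinity>" and a2: "archimedean_copula C2 \<phi>2" "\<phi>2 0 = \<infinity>"
    and \<epsilon>: "0 < \<epsilon>" "\<epsilon> \<le> 1"
    and pair: "\<And>x y. 0 < x \<Longrightarrow> x < \<epsilon> \<Longrightarrow> 0 < y \<Longrightarrow> y < \<epsilon> \<Longrightarrow>
      gen_real \<phi>1 (gen_inv (gen_real \<phi>2) (gen_real \<phi>2 x + gen_real \<phi>2 y)) \<le> gen_real \<phi>1 x + gen_real \<phi>1 y"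
  shows "loc_le C1 C2"
  unfolding loc_le_def
proof (intro exI[of _ \<epsilon>] conjI allI impI)
  fix u :: "real^'d" assume u: "u \<in> ball 0 \<epsilon> \<and> in_unit_cube u"
  define f1 where "f1 = gen_real \<phi>1"
  define f2 where "f2 = gen_real \<phi>2"
  have f1: "strict_gen f1" unfolding f1_def by (rule strict_gen_archimedean[OF a1])
  have f2: "strict_gen f2" unfolding f2_def by (rule strict_gen_archimedean[OF a2])
  show "C1 u \<le> C2 u"
  proof (cases "\<exists>k. u $ k = 0")
    case True
    then have "C1 u = 0" using a1 u unfolding archimedean_copula_def copula_def grounded_def by blast
    then show ?thesis using archimedean_copula_nonneg[OF a2(1)] u by simp
  next
    case False
    then have uk: "0 < u $ k" "u $ k < \<epsilon>" "u $ k \<le> 1" for k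
      using u ball_0_component_less[of u \<epsilon> k] \<epsilon> unfolding in_unit_cube_def by (auto simp: less_le)
    have nn: "0 \<le> (\<Sum>k\<in>UNIV. f1 (u $ k))" "0 \<le> (\<Sum>k\<in>UNIV. f2 (u $ k))"
      using uk strict_gen_nonneg[OF f1] strict_gen_nonneg[OF f2] by (auto intro: sum_nonneg)
    have "f1 (gen_inv f2 (\<Sum>k\<in>UNIV. f2 (u $ k))) \<le> (\<Sum>k\<in>UNIV. f1 (u $ k))"
      by (rule gen_comparison_sum(1)[OF f1 f2 \<epsilon>(2)]) (use pair uk in \<open>simp_all add: f1_def f2_def\<close>)
    then have "gen_inv f1 (\<Sum>k\<in>UNIV. f1 (u $ k)) \<le> gen_inv f2 (\<Sum>k\<in>UNIV. f2 (u $ k))"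
      using gen_inv_le_gen_inv_iff[OF f1 f2 nn] by simp
    moreover have "C1 u = gen_inv f1 (\<Sum>k\<in>UNIV. f1 (u $ k))" "C2 u = gen_inv f2 (\<Sum>k\<in>UNIV. f2 (u $ k))"
      unfolding f1_def f2_def using uk
      by (intro archimedean_copula_eq_gen_inv[OF a1] archimedean_copula_eq_gen_inv[OF a2]; simp)+
    ultimately show ?thesis by simp
  qed
qed (rule \<epsilon>(1))

lemma rv_index_less_if_TD_less:
  fixes C1 C2 :: "real^'d \<Rightarrow> real"
  assumes d: "CARD('d) \<ge> 2"
    and a1: "archimedean_copula C1 \<phi>1" "\<phi>1 0 = \<infinity>" and a2: "archimedean_copula C2 \<phi>2" "\<phi>2 0 = \<infinity>"
    and rv1: "regularly_varying_at0 \<phi>1 \<alpha>1" and rv2: "regularly_varying_at0 \<phi>2 \<alpha>2"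
    and td: "TD_less C1 C2"
  shows "\<alpha>1 \<noteq> \<infinity>" "\<alpha>1 < \<alpha>2"
proof -
  have f1: "strict_gen (gen_real \<phi>1)" by (rule strict_gen_archimedean[OF a1])
  have f2: "strict_gen (gen_real \<phi>2)" by (rule strict_gen_archimedean[OF a2])
  have "\<forall>i. 0 < ((\<chi> i. 1) :: real^'d) $ i" by simp
  then obtain L1 L2 where L: "has_tail_dep C1 (\<chi> i. 1) L1" "has_tail_dep C2 (\<chi> i. 1) L2" "L1 < L2"
    using td unfolding TD_less_def by blast
  have "1 \<le> real CARD('d)" using d by simp
  from rv_ratio_separated_if_diag_limit_less[OF f1 f2 this
    tendsto_diagonal_gen_inv[OF a1 L(1)] tendsto_diagonal_gen_inv[OF a2 L(2)] L(3)
    tendsto_rv_ratio[OF rv1] tendsto_rv_ratio[OF rv2]]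
  obtain l l' where "0 < l" "l < l'" "l' < 1"
    "rv_ratio \<alpha>1 l \<le> ereal (real CARD('d))" "ereal (real CARD('d)) \<le> rv_ratio \<alpha>2 l'"
    by blast
  moreover have "0 \<le> \<alpha>1" "0 \<le> \<alpha>2"
    using regularly_varying_at0_nonneg[OF rv1] regularly_varying_at0_nonneg[OF rv2] .
  moreover have "real CARD('d) > 1" using d by simp
  ultimately show "\<alpha>1 \<noteq> \<infinity>" "\<alpha>1 < \<alpha>2"
    using rv_index_less_if_ratio_separated[of \<alpha>1 \<alpha>2 "real CARD('d)" l l'] by blast+
qed

lemma loc_le_if_strict:
  fixes C1 C2 :: "real^'d \<Rightarrow> real"
  assumes d: "CARD('d) \<ge> 2"
    and a1: "archimedean_copula C1 \<phi>1" "\<phi>1 0 = \<infinity>" and a2: "archimedean_copula C2 \<phi>2" "\<phi>2 0 = \<infinity>"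
    and rv1: "regularly_varying_at0 \<phi>1 \<alpha>1" and rv2: "regularly_varying_at0 \<phi>2 \<alpha>2"
    and td: "TD_less C1 C2"
  shows "loc_le C1 C2"
proof -
  have f1: "strict_gen (gen_real \<phi>1)" by (rule strict_gen_archimedean[OF a1])
  have f2: "strict_gen (gen_real \<phi>2)" by (rule strict_gen_archimedean[OF a2])
  have cv1: "convex_on {0<..1} (gen_real \<phi>1)" and cv2: "convex_on {0<..1} (gen_real \<phi>2)"
    using convex_on_strict_gen[OF f1 convex_on_gen_inv_archimedean[OF a1 d]]
      convex_on_strict_gen[OF f2 convex_on_gen_inv_archimedean[OF a2 d]] .
  have "0 \<le> \<alpha>1" using rv1 by (rule regularly_varying_at0_nonneg)
  obtain \<epsilon> where "0 < \<epsilon>" "\<epsilon> \<le> 1"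
    "\<And>x y. 0 < x \<Longrightarrow> x < \<epsilon> \<Longrightarrow> 0 < y \<Longrightarrow> y < \<epsilon> \<Longrightarrow> gen_real \<phi>1 (gen_inv (gen_real \<phi>2)
       (gen_real \<phi>2 x + gen_real \<phi>2 y)) \<le> gen_real \<phi>1 x + gen_real \<phi>1 y"
    by (rule gen_comparison_near_0[OF f1 f2 cv1 cv2 tendsto_rv_ratio[OF rv1] tendsto_rv_ratio[OF rv2]
          \<open>0 \<le> \<alpha>1\<close> rv_index_less_if_TD_less[OF d a1 a2 rv1 rv2 td]]) (assumption | rule that)+
  then show ?thesis by (rule loc_le_if_gen_comparison[OF a1 a2])
qed

theorem mainTheorem11:
  fixes C1 C2 :: "real^'d \<Rightarrow> real" and \<phi>1 \<phi>2 :: "real \<Rightarrow> ereal" and \<alpha>1 \<alpha>2 :: ereal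
  assumes "CARD('d) \<ge> 2"
    and "archimedean_copula C1 \<phi>1" and "archimedean_copula C2 \<phi>2"
    and "regularly_varying_at0 \<phi>1 \<alpha>1" and "regularly_varying_at0 \<phi>2 \<alpha>2"
    and "TD_less C1 C2"
  shows "loc_le C1 C2"
proof (cases "\<phi>1 0 = \<infinity>")
  case True
  moreover have "\<phi>2 0 = \<infinity>" using strict_if_TD_less[OF assms(1,2,3,6)] .
  ultimately show ?thesis using loc_le_if_strict[OF assms(1,2) _ assms(3) _ assms(4-6)] by simp
next
  case False
  then show ?thesis using loc_le_if_nonstrict[OF assms(2) _ assms(3,1)] by simp
qed

end
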